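(* For $j=1,\dots,J$ let $X_j\in\mathbb{R}^{n_j\times m}$ have reduced singular value decomposition $X_j=P_j\Sigma_jQ_j^T$, where $P_j\in\mathbb{R}^{n_j\times r_j}$ and $Q_j\in\mathbb{R}^{m\times r_j}$ have orthonormal columns and $\Sigma_j\in\mathbb{R}^{r_j\times r_j}$ is diagonal with positive diagonal entries. Set $A_j=P_j^T\in\mathbb{R}^{r_j\times n_j}$ and $B_j=-\Sigma_j^{-1}Q_j^T\in\mathbb{R}^{r_j\times m}$, and fix a positive integer $\ell$. Consider the problem $$\min_{W_1,\dots,W_J,Z}\ \sum_{j=1}^J\|W_j\|_1\quad\text{s.t.}\quad A_jW_j+B_jZ=0\ (j=1,\dots,J),\qquad Z^TZ=I_\ell,$$ over $W_j\in\mathbb{R}^{n_j\times\ell}$, $Z\in\mathbb{R}^{m\times\ell}$. Let $(W_1^*,\dots,W_J^*,Z^* )$ be a local minimizer of this problem. Then there exist matrices $\Lambda^*_{1,j}\in\mathbb{R}^{r_j\times\ell}$ ($j=1,\dots,J$) and $\Lambda^*_2\in\mathbb{R}^{\ell\times\ell}$ such that for each $j=1,\dots,J$: $$A_j^T\Lambda^*_{1,j}\in\partial\|W_j^*\|_1,\qquad \sum_{j=1}^J B_j^T\Lambda^*_{1,j}+Z^*\Lambda^*_2=0,\qquad A_jW_j^*+B_jZ^*=0,\qquad (Z^* )^TZ^*=I_\ell.$$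
   Context: For a matrix $W$, $\|W\|_1$ denotes the sum of the $\ell_1$ norms of its columns, i.e. the sum of the absolute values of all its entries. $\partial\|W\|_1$ denotes the (convex) subdifferential of the function $\|\cdot\|_1$ at $W$, with matrices paired via the trace inner product $\langle U,V\rangle=\mathrm{Trace}(U^TV)$. *)

theory Defs
  imports "Jordan_Normal_Form.Matrix"
begin

definition l1_norm_mat :: "real mat \<Rightarrow> real" where
  "l1_norm_mat M = (\<Sum>i<dim_row M. \<Sum>k<dim_col M. \<bar>M $$ (i,k)\<bar>)"

definition mtrace :: "real mat \<Rightarrow> real" where
  "mtrace M = (\<Sum>i<dim_row M. M $$ (i,i))"

definition tr_inner :: "real mat \<Rightarrow> real mat \<Rightarrow> real" where
  "tr_inner U V = mtrace (transpose_mat U * V)"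

definition subdiff_l1 :: "real mat \<Rightarrow> real mat set" where
  "subdiff_l1 W = {G \<in> carrier_mat (dim_row W) (dim_col W).
      \<forall>V \<in> carrier_mat (dim_row W) (dim_col W).
        l1_norm_mat V \<ge> l1_norm_mat W + tr_inner G (V - W)}"

definition fro_norm :: "real mat \<Rightarrow> real" where
  "fro_norm M = sqrt (\<Sum>i<dim_row M. \<Sum>k<dim_col M. (M $$ (i,k))^2)"

definition msum :: "nat \<Rightarrow> nat \<Rightarrow> nat \<Rightarrow> (nat \<Rightarrow> real mat) \<Rightarrow> real mat" where
  "msum nr nc J F = mat nr nc (\<lambda>(i,k). \<Sum>j\<in>{1..J}. F j $$ (i,k))"

definition feasible ::
  "nat \<Rightarrow> (nat \<Rightarrow> nat) \<Rightarrow> (nat \<Rightarrow> nat) \<Rightarrow> nat \<Rightarrow> nat \<Rightarrow>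
   (nat \<Rightarrow> real mat) \<Rightarrow> (nat \<Rightarrow> real mat) \<Rightarrow> (nat \<Rightarrow> real mat) \<Rightarrow> real mat \<Rightarrow> bool" where
  "feasible J n r m l A B W Z \<longleftrightarrow>
     Z \<in> carrier_mat m l \<and> transpose_mat Z * Z = 1\<^sub>m l \<and>
     (\<forall>j\<in>{1..J}. W j \<in> carrier_mat (n j) l \<and> A j * W j + B j * Z = 0\<^sub>m (r j) l)"

definition objective :: "nat \<Rightarrow> (nat \<Rightarrow> real mat) \<Rightarrow> real" where
  "objective J W = (\<Sum>j\<in>{1..J}. l1_norm_mat (W j))"

definition local_minimizer ::
  "nat \<Rightarrow> (nat \<Rightarrow> nat) \<Rightarrow> (nat \<Rightarrow> nat) \<Rightarrow> nat \<Rightarrow> nat \<Rightarrow>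
   (nat \<Rightarrow> real mat) \<Rightarrow> (nat \<Rightarrow> real mat) \<Rightarrow> (nat \<Rightarrow> real mat) \<Rightarrow> real mat \<Rightarrow> bool" where
  "local_minimizer J n r m l A B Ws Zs \<longleftrightarrow>
     feasible J n r m l A B Ws Zs \<and>
     (\<exists>\<epsilon>>0. \<forall>W Z. feasible J n r m l A B W Z \<and>
        (\<Sum>j\<in>{1..J}. (fro_norm (W j - Ws j))^2) + (fro_norm (Z - Zs))^2 < \<epsilon>^2
        \<longrightarrow> objective J Ws \<le> objective J W)"

end

theory Submission
  imports Defs "Jordan_Normal_Form.Determinant"
begin

(* At a local minimizer the directional derivative p(D) = sum_j ||.||_1'(W_j; D_j) is nonnegative
   along every linearised feasible direction (D_1, ..., D_J, D_Z), i.e. A_j D_j + B_j D_Z = 0 and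
   Z^T D_Z = 0: such a direction is followed by a feasible curve, obtained by retracting Z + t D_Z
   onto the Stiefel manifold with an O(t^2) error and absorbing that error into the W_j through
   the right inverse P_j of A_j = P_j^T.  Since p is sublinear and the linearised directions form
   a subspace, finite-dimensional Hahn-Banach gives a linear functional G <= p vanishing on them.
   G <= p makes each block G_j a subgradient of ||.||_1 at W_j.  Orthogonality to the directions
   with D_Z = 0 puts G_j into the range of P_j, so G_j = A_j^T Lambda_1j; orthogonality to the
   directions D_j = -P_j B_j D_Z puts sum_j B_j^T Lambda_1j into the column space of Z. *)

definition lin_subspace :: "('i \<Rightarrow> real) set \<Rightarrow> bool" where
  "lin_subspace M \<longleftrightarrow> (\<lambda>_. 0) \<in> M \<and> (\<forall>x\<in>M. \<forall>y\<in>M. (\<lambda>i. x i + y i) \<in> M) \<and>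
     (\<forall>x\<in>M. \<forall>c. (\<lambda>i. c * x i) \<in> M)"

definition linear_on :: "('i \<Rightarrow> real) set \<Rightarrow> (('i \<Rightarrow> real) \<Rightarrow> real) \<Rightarrow> bool" where
  "linear_on M g \<longleftrightarrow> (\<forall>x\<in>M. \<forall>y\<in>M. g (\<lambda>i. x i + y i) = g x + g y) \<and>
     (\<forall>x\<in>M. \<forall>c. g (\<lambda>i. c * x i) = c * g x)"

definition sublinear :: "(('i \<Rightarrow> real) \<Rightarrow> real) \<Rightarrow> bool" where
  "sublinear p \<longleftrightarrow> (\<forall>x y. p (\<lambda>i. x i + y i) \<le> p x + p y) \<and>
     (\<forall>x c. c > 0 \<longrightarrow> p (\<lambda>i. c * x i) = c * p x)"

lemma lin_subspaceD:
  assumes "lin_subspace M"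
  shows "(\<lambda>_. 0) \<in> M" "x \<in> M \<Longrightarrow> y \<in> M \<Longrightarrow> (\<lambda>i. x i + y i) \<in> M" "x \<in> M \<Longrightarrow> (\<lambda>i. c * x i) \<in> M"
  using assms unfolding lin_subspace_def by auto

lemma linear_onD:
  assumes "linear_on M g"
  shows "x \<in> M \<Longrightarrow> y \<in> M \<Longrightarrow> g (\<lambda>i. x i + y i) = g x + g y" "x \<in> M \<Longrightarrow> g (\<lambda>i. c * x i) = c * g x"
  using assms unfolding linear_on_def by auto

lemma sublinearD:
  assumes "sublinear p"
  shows "p (\<lambda>i. x i + y i) \<le> p x + p y" "c > 0 \<Longrightarrow> p (\<lambda>i. c * x i) = c * p x"
  using assms unfolding sublinear_def by auto

definition subspace_insert :: "('i \<Rightarrow> real) set \<Rightarrow> ('i \<Rightarrow> real) \<Rightarrow> ('i \<Rightarrow> real) set" where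
  "subspace_insert M v = {(\<lambda>i. x i + a * v i) | x a. x \<in> M}"

lemma subspace_insertI: "x \<in> M \<Longrightarrow> (\<lambda>i. x i + a * v i) \<in> subspace_insert M v"
  unfolding subspace_insert_def by blast

lemma subspace_insertE:
  assumes "z \<in> subspace_insert M v"
  obtains x a where "x \<in> M" "z = (\<lambda>i. x i + a * v i)"
  using assms unfolding subspace_insert_def by blast

lemma lin_subspace_subspace_insert:
  assumes M: "lin_subspace M"
  shows "lin_subspace (subspace_insert M v)"
  unfolding lin_subspace_def
proof (intro conjI ballI allI)
  show "(\<lambda>_. 0) \<in> subspace_insert M v"
    using subspace_insertI[OF lin_subspaceD(1)[OF M], of 0 v] by simp
next
  fix z w assume z: "z \<in> subspace_insert M v" and w: "w \<in> subspace_insert M v"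
  obtain x a where x: "x \<in> M" "z = (\<lambda>i. x i + a * v i)" using z by (rule subspace_insertE)
  obtain y b where y: "y \<in> M" "w = (\<lambda>i. y i + b * v i)" using w by (rule subspace_insertE)
  have "(\<lambda>i. z i + w i) = (\<lambda>i. (\<lambda>i. x i + y i) i + (a + b) * v i)"
    using x y by (auto simp: algebra_simps)
  then show "(\<lambda>i. z i + w i) \<in> subspace_insert M v"
    using subspace_insertI[OF lin_subspaceD(2)[OF M x(1) y(1)]] by simp
next
  fix z d assume "z \<in> subspace_insert M v"
  then obtain x a where xa: "x \<in> M" "z = (\<lambda>i. x i + a * v i)" by (rule subspace_insertE)
  have "(\<lambda>i. d * z i) = (\<lambda>i. (\<lambda>i. d * x i) i + (d * a) * v i)"
    using xa by (auto simp: algebra_simps)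
  then show "(\<lambda>i. d * z i) \<in> subspace_insert M v"
    using subspace_insertI[OF lin_subspaceD(3)[OF M xa(1)]] by simp
qed

lemma subspace_insert_coeff_unique:
  assumes M: "lin_subspace M" and v: "v \<notin> M" and xy: "x \<in> M" "y \<in> M"
    and eq: "(\<lambda>i. x i + a * v i) = (\<lambda>i. y i + b * v i)"
  shows "a = b"
proof (rule ccontr)
  assume ab: "a \<noteq> b"
  have "(\<lambda>i. (1/(b - a)) * ((\<lambda>i. x i + (-1) * y i) i)) \<in> M"
    using xy M by (intro lin_subspaceD) (auto intro: lin_subspaceD)
  moreover have "(\<lambda>i. (1/(b - a)) * ((\<lambda>i. x i + (-1) * y i) i)) = v"
  proof
    fix i
    have "x i + a * v i = y i + b * v i" using fun_cong[OF eq, of i] by simp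
    then show "(1/(b - a)) * ((\<lambda>i. x i + (-1) * y i) i) = v i" using ab
      by (simp add: field_simps)
  qed
  ultimately show False using v by simp
qed

lemma linear_on_subspace_insert:
  assumes M: "lin_subspace M" and g: "linear_on M g" and v: "v \<notin> M"
  shows "\<exists>g'. linear_on (subspace_insert M v) g' \<and> (\<forall>x\<in>M. \<forall>a. g' (\<lambda>i. x i + a * v i) = g x + a * c)"
proof -
  define coef where "coef z = (SOME a. \<exists>x\<in>M. z = (\<lambda>i. x i + a * v i))" for z
  define g' where "g' z = g (\<lambda>i. z i - coef z * v i) + coef z * c" for z
  have g'_eq: "g' (\<lambda>i. x i + a * v i) = g x + a * c" if x: "x \<in> M" for x a
  proof -
    have "\<exists>x'\<in>M. (\<lambda>i. x i + a * v i) = (\<lambda>i. x' i + coef (\<lambda>i. x i + a * v i) * v i)"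
      unfolding coef_def by (rule someI_ex) (use x in blast)
    then have "coef (\<lambda>i. x i + a * v i) = a"
      using subspace_insert_coeff_unique[OF M v x] by metis
    then show ?thesis unfolding g'_def by simp
  qed
  have "linear_on (subspace_insert M v) g'"
    unfolding linear_on_def
  proof (intro conjI ballI allI)
    fix z w assume z: "z \<in> subspace_insert M v" and w: "w \<in> subspace_insert M v"
    obtain x a where x: "x \<in> M" "z = (\<lambda>i. x i + a * v i)" using z by (rule subspace_insertE)
    obtain y b where y: "y \<in> M" "w = (\<lambda>i. y i + b * v i)" using w by (rule subspace_insertE)
    have "(\<lambda>i. z i + w i) = (\<lambda>i. (\<lambda>i. x i + y i) i + (a + b) * v i)"
      using x y by (auto simp: algebra_simps)
    then have "g' (\<lambda>i. z i + w i) = g (\<lambda>i. x i + y i) + (a + b) * c"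
      using g'_eq[OF lin_subspaceD(2)[OF M x(1) y(1)]] by simp
    then show "g' (\<lambda>i. z i + w i) = g' z + g' w"
      using g'_eq[OF x(1)] g'_eq[OF y(1)] linear_onD(1)[OF g x(1) y(1)] x(2) y(2)
      by (simp add: algebra_simps)
  next
    fix z d assume "z \<in> subspace_insert M v"
    then obtain x a where x: "x \<in> M" "z = (\<lambda>i. x i + a * v i)" by (rule subspace_insertE)
    have "(\<lambda>i. d * z i) = (\<lambda>i. (\<lambda>i. d * x i) i + (d * a) * v i)"
      using x by (auto simp: algebra_simps)
    then have "g' (\<lambda>i. d * z i) = g (\<lambda>i. d * x i) + (d * a) * c"
      using g'_eq[OF lin_subspaceD(3)[OF M x(1)]] by simp
    then show "g' (\<lambda>i. d * z i) = d * g' z"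
      using g'_eq[OF x(1)] linear_onD(2)[OF g x(1)] x(2) by (simp add: algebra_simps)
  qed
  then show ?thesis using g'_eq by (intro exI[of _ g'] conjI ballI allI)
qed

(* Sublinearity gives g y - p (y - v) <= p (x + v) - g x for all x, y in M. *)
lemma sublinear_extension_constant:
  assumes p: "sublinear p" and M: "lin_subspace M" and g: "linear_on M g" and le: "\<forall>x\<in>M. g x \<le> p x"
  shows "\<exists>c. (\<forall>y\<in>M. g y - p (\<lambda>i. y i + (-1) * v i) \<le> c) \<and>
    (\<forall>x\<in>M. c \<le> p (\<lambda>i. x i + v i) - g x)"
proof -
  define S where "S = {g y - p (\<lambda>i. y i + (-1) * v i) | y. y \<in> M}"
  have S_le: "s \<le> p (\<lambda>i. x i + v i) - g x" if s: "s \<in> S" and x: "x \<in> M" for s x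
  proof -
    obtain y where y: "y \<in> M" "s = g y - p (\<lambda>i. y i + (-1) * v i)" using s unfolding S_def by blast
    have "g y + g x = g (\<lambda>i. y i + x i)" using linear_onD(1)[OF g y(1) x] by simp
    also have "\<dots> \<le> p (\<lambda>i. y i + x i)" using le lin_subspaceD(2)[OF M y(1) x] by blast
    also have "(\<lambda>i. y i + x i) = (\<lambda>i. (\<lambda>i. y i + (-1) * v i) i + (\<lambda>i. x i + v i) i)" by auto
    also have "p \<dots> \<le> p (\<lambda>i. y i + (-1) * v i) + p (\<lambda>i. x i + v i)" by (rule sublinearD(1)[OF p])
    finally show ?thesis using y by simp
  qed
  have ne: "S \<noteq> {}" using lin_subspaceD(1)[OF M] unfolding S_def by blast
  have bdd: "bdd_above S"
    using S_le[OF _ lin_subspaceD(1)[OF M]] by (intro bdd_aboveI) blast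
  show ?thesis
  proof (intro exI[of _ "Sup S"] conjI ballI)
    show "g y - p (\<lambda>i. y i + (-1) * v i) \<le> Sup S" if "y \<in> M" for y
      using that bdd by (intro cSup_upper) (auto simp: S_def)
    show "Sup S \<le> p (\<lambda>i. x i + v i) - g x" if "x \<in> M" for x
      using ne S_le[OF _ that] by (rule cSup_least)
  qed
qed

lemma le_sublinear_on_line:
  assumes p: "sublinear p" and M: "lin_subspace M" and g: "linear_on M g" and le: "\<forall>x\<in>M. g x \<le> p x"
    and c_ge: "\<forall>y\<in>M. g y - p (\<lambda>i. y i + (-1) * v i) \<le> c"
    and c_le: "\<forall>x\<in>M. c \<le> p (\<lambda>i. x i + v i) - g x"
    and x: "x \<in> M"
  shows "g x + a * c \<le> p (\<lambda>i. x i + a * v i)"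
proof (cases a "0::real" rule: linorder_cases)
  case equal
  then show ?thesis using le x by simp
next
  case greater
  define x' where "x' = (\<lambda>i. (1/a) * x i)"
  have x': "x' \<in> M" unfolding x'_def using lin_subspaceD(3)[OF M x] .
  have "a * c \<le> a * p (\<lambda>i. x' i + v i) - a * g x'"
    using c_le[rule_format, OF x'] greater by (simp add: right_diff_distrib[symmetric])
  also have "(\<lambda>i. a * (x' i + v i)) = (\<lambda>i. x i + a * v i)"
    unfolding x'_def using greater by (auto simp: field_simps)
  then have "a * p (\<lambda>i. x' i + v i) = p (\<lambda>i. x i + a * v i)"
    using sublinearD(2)[OF p greater, of "\<lambda>i. x' i + v i"] by simp
  also have "a * g x' = g x"
    using linear_onD(2)[OF g x, of "1/a"] greater unfolding x'_def by simp
  finally show ?thesis by simp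
next
  case less
  define x' where "x' = (\<lambda>i. (1/(-a)) * x i)"
  have x': "x' \<in> M" unfolding x'_def using lin_subspaceD(3)[OF M x] .
  have pos: "-a > 0" using less by simp
  have "(-a) * (g x' - p (\<lambda>i. x' i + (-1) * v i)) \<le> (-a) * c"
    using c_ge[rule_format, OF x'] pos by (intro mult_left_mono) auto
  then have "(-a) * g x' - (-a) * p (\<lambda>i. x' i + (-1) * v i) \<le> (-a) * c"
    by (simp only: right_diff_distrib)
  also have "(\<lambda>i. (-a) * (x' i + (-1) * v i)) = (\<lambda>i. x i + a * v i)"
    unfolding x'_def using less by (auto simp: field_simps)
  then have "(-a) * p (\<lambda>i. x' i + (-1) * v i) = p (\<lambda>i. x i + a * v i)"
    using sublinearD(2)[OF p pos, of "\<lambda>i. x' i + (-1) * v i"] by simp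
  also have "(-a) * g x' = g x"
    using linear_onD(2)[OF g x, of "1/(-a)"] less unfolding x'_def by simp
  finally show ?thesis by simp
qed

lemma hahn_banach_extend_one:
  assumes p: "sublinear p" and M: "lin_subspace M" and g: "linear_on M g" and le: "\<forall>x\<in>M. g x \<le> p x"
  shows "\<exists>M' g'. lin_subspace M' \<and> linear_on M' g' \<and> M \<subseteq> M' \<and> v \<in> M' \<and>
    (\<forall>x\<in>M. g' x = g x) \<and> (\<forall>x\<in>M'. g' x \<le> p x)"
proof (cases "v \<in> M")
  case True
  then show ?thesis using M g le by blast
next
  case False
  from sublinear_extension_constant[OF p M g le, where v = v]
  obtain c where c_ge: "\<forall>y\<in>M. g y - p (\<lambda>i. y i + (-1) * v i) \<le> c"
    and c_le: "\<forall>x\<in>M. c \<le> p (\<lambda>i. x i + v i) - g x"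
    by (elim exE conjE)
  from linear_on_subspace_insert[OF M g False, where c = c]
  obtain g' where g': "linear_on (subspace_insert M v) g'"
    and g'_eq: "\<forall>x\<in>M. \<forall>a. g' (\<lambda>i. x i + a * v i) = g x + a * c"
    by (elim exE conjE)
  show ?thesis
  proof (intro exI[of _ "subspace_insert M v"] exI[of _ g'] conjI ballI subsetI g'
      lin_subspace_subspace_insert[OF M])
    fix x assume "x \<in> M"
    then show "x \<in> subspace_insert M v" "g' x = g x"
      using subspace_insertI[of x M 0 v] g'_eq[rule_format, of x 0] by simp_all
  next
    show "v \<in> subspace_insert M v" using subspace_insertI[OF lin_subspaceD(1)[OF M], of 1 v] by simp
  next
    fix z assume "z \<in> subspace_insert M v"
    then obtain x a where x: "x \<in> M" and z: "z = (\<lambda>i. x i + a * v i)" by (rule subspace_insertE)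
    have "g' z = g x + a * c" using g'_eq x z by simp
    also have "\<dots> \<le> p z" unfolding z by (rule le_sublinear_on_line[OF p M g le c_ge c_le x])
    finally show "g' z \<le> p z" .
  qed
qed

lemma hahn_banach_extend_finite:
  assumes "finite S"
  shows "sublinear p \<Longrightarrow> lin_subspace M \<Longrightarrow> linear_on M g \<Longrightarrow> \<forall>x\<in>M. g x \<le> p x \<Longrightarrow>
    \<exists>M' g'. lin_subspace M' \<and> linear_on M' g' \<and> M \<subseteq> M' \<and> S \<subseteq> M' \<and>
      (\<forall>x\<in>M. g' x = g x) \<and> (\<forall>x\<in>M'. g' x \<le> p x)"
  using assms
proof (induction S arbitrary: M g rule: finite_induct)
  case empty
  then show ?case by blast
next
  case (insert v S)
  obtain M1 g1 where 1: "lin_subspace M1" "linear_on M1 g1" "M \<subseteq> M1" "v \<in> M1"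
    "\<forall>x\<in>M. g1 x = g x" "\<forall>x\<in>M1. g1 x \<le> p x"
    using hahn_banach_extend_one[OF insert.prems(1-4), of v] by blast
  obtain M2 g2 where 2: "lin_subspace M2" "linear_on M2 g2" "M1 \<subseteq> M2" "S \<subseteq> M2"
    "\<forall>x\<in>M1. g2 x = g1 x" "\<forall>x\<in>M2. g2 x \<le> p x"
    using insert.IH[OF insert.prems(1) 1(1,2,6)] by blast
  show ?case using 1 2 by (intro exI[of _ M2] exI[of _ g2]) auto
qed

definition delta_fun :: "'i \<Rightarrow> 'i \<Rightarrow> real" where "delta_fun x = (\<lambda>y. if y = x then 1 else 0)"

lemma linear_on_delta_combination:
  assumes M: "lin_subspace M" and g: "linear_on M g" and deltas: "\<forall>x\<in>I. delta_fun x \<in> M"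
    and fin: "finite I"
  shows "(\<lambda>y. \<Sum>x\<in>I. d x * delta_fun x y) \<in> M \<and> g (\<lambda>y. \<Sum>x\<in>I. d x * delta_fun x y)
    = (\<Sum>x\<in>I. d x * g (delta_fun x))"
  using fin deltas
proof (induction I rule: finite_induct)
  case empty
  have "g (\<lambda>_. 0) = 0" using linear_onD(2)[OF g lin_subspaceD(1)[OF M], of 0] by simp
  then show ?case using lin_subspaceD(1)[OF M] by simp
next
  case (insert a I)
  have e: "delta_fun a \<in> M" using insert by simp
  have IH: "(\<lambda>y. \<Sum>x\<in>I. d x * delta_fun x y) \<in> M" "g (\<lambda>y. \<Sum>x\<in>I. d x * delta_fun x y)
    = (\<Sum>x\<in>I. d x * g (delta_fun x))"
    using insert by auto
  have eq: "(\<lambda>y. \<Sum>x\<in>insert a I. d x * delta_fun x y)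
    = (\<lambda>y. (\<lambda>y. d a * delta_fun a y) y + (\<lambda>y. \<Sum>x\<in>I. d x * delta_fun x y) y)"
    using insert by simp
  show ?case unfolding eq
    using lin_subspaceD(2)[OF M lin_subspaceD(3)[OF M e] IH(1)]
      linear_onD(1)[OF g lin_subspaceD(3)[OF M e] IH(1)] linear_onD(2)[OF g e] IH(2) insert
    by simp
qed

lemma delta_combination_eq:
  assumes "finite I" "\<forall>y. y \<notin> I \<longrightarrow> d y = 0"
  shows "(\<lambda>y. \<Sum>x\<in>I. d x * delta_fun x y) = d"
proof
  fix y
  show "(\<Sum>x\<in>I. d x * delta_fun x y) = d y"
    using assms by (cases "y \<in> I") (auto simp: delta_fun_def if_distrib sum.delta cong: if_cong)
qed

lemma hahn_banach_annihilator:
  assumes fin: "finite I" and p: "sublinear p" and L: "lin_subspace L"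
    and Lsupp: "\<forall>d\<in>L. \<forall>y. y \<notin> I \<longrightarrow> d y = 0"
    and pL: "\<forall>d\<in>L. p d \<ge> 0"
  shows "\<exists>cf. (\<forall>x\<in>I. cf x \<le> p (delta_fun x) \<and> - cf x \<le> p (\<lambda>y. - delta_fun x y)) \<and>
              (\<forall>d\<in>L. (\<Sum>x\<in>I. d x * cf x) = 0)"
proof -
  have g0: "linear_on L (\<lambda>_. 0)" unfolding linear_on_def by simp
  obtain M g where M: "lin_subspace M" "linear_on M g" "L \<subseteq> M" "delta_fun ` I \<subseteq> M"
    "\<forall>x\<in>L. g x = 0" "\<forall>x\<in>M. g x \<le> p x"
    using hahn_banach_extend_finite[of "delta_fun ` I" p L "\<lambda>_. 0"] fin p L g0 pL by auto
  have deltasM: "\<forall>x\<in>I. delta_fun x \<in> M" using M(4) by auto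
  show ?thesis
  proof (intro exI[of _ "\<lambda>x. g (delta_fun x)"] conjI ballI)
    fix x assume x: "x \<in> I"
    show "g (delta_fun x) \<le> p (delta_fun x)" using M(6) deltasM x by blast
    have "(\<lambda>y. (-1) * delta_fun x y) \<in> M" using lin_subspaceD(3)[OF M(1)] deltasM x by blast
    then have "g (\<lambda>y. (-1) * delta_fun x y) \<le> p (\<lambda>y. (-1) * delta_fun x y)" using M(6) by blast
    then show "- g (delta_fun x) \<le> p (\<lambda>y. - delta_fun x y)"
      using linear_onD(2)[OF M(2), of "delta_fun x" "-1"] deltasM x by simp
  next
    fix d assume d: "d \<in> L"
    have "g (\<lambda>y. \<Sum>x\<in>I. d x * delta_fun x y) = (\<Sum>x\<in>I. d x * g (delta_fun x))"
      using linear_on_delta_combination[OF M(1,2) deltasM fin] by blast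
    moreover have "(\<lambda>y. \<Sum>x\<in>I. d x * delta_fun x y) = d" using delta_combination_eq[OF fin] Lsupp d
      by blast
    ultimately show "(\<Sum>x\<in>I. d x * g (delta_fun x)) = 0" using M(3,5) d by auto
  qed
qed

definition frob_inner :: "real mat \<Rightarrow> real mat \<Rightarrow> real" where
  "frob_inner X Y = (\<Sum>i<dim_row X. \<Sum>k<dim_col X. X $$ (i,k) * Y $$ (i,k))"

lemma l1_norm_mat_nonneg: "l1_norm_mat A \<ge> 0"
  unfolding l1_norm_mat_def by (intro sum_nonneg) auto

lemma abs_entry_le_l1_norm_mat:
  assumes "i < dim_row A" "k < dim_col A"
  shows "\<bar>A $$ (i,k)\<bar> \<le> l1_norm_mat A"
proof -
  have "\<bar>A $$ (i,k)\<bar> \<le> (\<Sum>k'<dim_col A. \<bar>A $$ (i,k')\<bar>)"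
    using assms by (intro member_le_sum) auto
  also have "\<dots> \<le> l1_norm_mat A" unfolding l1_norm_mat_def
    using assms by (intro member_le_sum[of i "{..<dim_row A}"]) (auto intro: sum_nonneg)
  finally show ?thesis .
qed

lemma l1_norm_mat_add_le:
  assumes "A \<in> carrier_mat a b" "B \<in> carrier_mat a b"
  shows "l1_norm_mat (A + B) \<le> l1_norm_mat A + l1_norm_mat B"
  using assms unfolding l1_norm_mat_def
  by (auto simp: sum.distrib[symmetric] intro!: sum_mono abs_triangle_ineq)

lemma l1_norm_mat_smult: "l1_norm_mat (c \<cdot>\<^sub>m A) = \<bar>c\<bar> * l1_norm_mat A"
  unfolding l1_norm_mat_def by (auto simp: sum_distrib_left abs_mult)

lemma l1_norm_mat_uminus: "l1_norm_mat (- A) = l1_norm_mat A"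
  unfolding l1_norm_mat_def by auto

lemma sum_mult_le_sum_mult_sum:
  fixes a b :: "nat \<Rightarrow> real"
  assumes "\<And>j. a j \<ge> 0" "\<And>j. b j \<ge> 0"
  shows "(\<Sum>j<n. a j * b j) \<le> (\<Sum>j<n. a j) * (\<Sum>j<n. b j)"
proof -
  have "(\<Sum>j<n. a j * b j) \<le> (\<Sum>j<n. a j * (\<Sum>j<n. b j))"
    using assms by (intro sum_mono mult_left_mono) (auto intro: member_le_sum)
  then show ?thesis by (simp add: sum_distrib_right)
qed

lemma l1_norm_mat_mult_le:
  assumes A: "A \<in> carrier_mat a b" and B: "B \<in> carrier_mat b c"
  shows "l1_norm_mat (A * B) \<le> l1_norm_mat A * l1_norm_mat B"
proof -
  have "l1_norm_mat (A * B) = (\<Sum>i<a. \<Sum>k<c. \<bar>\<Sum>j<b. A $$ (i,j) * B $$ (j,k)\<bar>)"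
    unfolding l1_norm_mat_def using A B
    by (auto simp: scalar_prod_def row_def col_def atLeast0LessThan intro!: sum.cong)
  also have "\<dots> \<le> (\<Sum>i<a. \<Sum>k<c. \<Sum>j<b. \<bar>A $$ (i,j)\<bar> * \<bar>B $$ (j,k)\<bar>)"
    by (intro sum_mono order.trans[OF sum_abs]) (simp add: abs_mult)
  also have "\<dots> = (\<Sum>i<a. \<Sum>j<b. \<Sum>k<c. \<bar>A $$ (i,j)\<bar> * \<bar>B $$ (j,k)\<bar>)"
    by (rule sum.cong[OF refl]) (rule sum.swap)
  also have "\<dots> = (\<Sum>j<b. \<Sum>i<a. \<Sum>k<c. \<bar>A $$ (i,j)\<bar> * \<bar>B $$ (j,k)\<bar>)"
    by (rule sum.swap)
  also have "\<dots> = (\<Sum>j<b. (\<Sum>i<a. \<bar>A $$ (i,j)\<bar>) * (\<Sum>k<c. \<bar>B $$ (j,k)\<bar>))"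
    by (simp only: sum_product)
  also have "\<dots> \<le> (\<Sum>j<b. (\<Sum>i<a. \<bar>A $$ (i,j)\<bar>)) * (\<Sum>j<b. (\<Sum>k<c. \<bar>B $$ (j,k)\<bar>))"
    by (rule sum_mult_le_sum_mult_sum) (auto intro: sum_nonneg)
  also have "\<dots> = l1_norm_mat A * l1_norm_mat B"
    unfolding l1_norm_mat_def using A B by (subst (2) sum.swap) simp
  finally show ?thesis .
qed

lemma fro_norm_sq_le_l1_norm_sq: "(fro_norm A)^2 \<le> (l1_norm_mat A)^2"
proof -
  have t: "(A $$ (i,k))^2 \<le> \<bar>A $$ (i,k)\<bar> * l1_norm_mat A" if "i < dim_row A" "k < dim_col A" for i k
  proof -
    have "(A $$ (i,k))^2 = \<bar>A $$ (i,k)\<bar> * \<bar>A $$ (i,k)\<bar>" by (simp add: power2_eq_square)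
    also have "\<dots> \<le> \<bar>A $$ (i,k)\<bar> * l1_norm_mat A"
      by (rule mult_left_mono[OF abs_entry_le_l1_norm_mat[OF that]]) simp
    finally show ?thesis .
  qed
  have "(fro_norm A)^2 = (\<Sum>i<dim_row A. \<Sum>k<dim_col A. (A $$ (i,k))^2)"
    unfolding fro_norm_def by (simp add: sum_nonneg)
  also have "\<dots> \<le> (\<Sum>i<dim_row A. \<Sum>k<dim_col A. \<bar>A $$ (i,k)\<bar> * l1_norm_mat A)"
    by (rule sum_mono, rule sum_mono, rule t) auto
  also have "\<dots> = (l1_norm_mat A)^2"
    unfolding l1_norm_mat_def by (simp add: sum_distrib_right power2_eq_square)
  finally show ?thesis .
qed

lemma fro_norm_sq_le_if_l1_norm_le:
  assumes "l1_norm_mat X \<le> t * c" "0 \<le> t"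
  shows "(fro_norm X)^2 \<le> t^2 * c^2"
proof -
  have "(fro_norm X)^2 \<le> (l1_norm_mat X)^2" by (rule fro_norm_sq_le_l1_norm_sq)
  also have "\<dots> \<le> (t * c)^2" using assms l1_norm_mat_nonneg[of X] by (intro power_mono) auto
  finally show ?thesis by (simp add: power_mult_distrib)
qed

lemma frob_inner_mult_right:
  assumes A: "A \<in> carrier_mat a c" and X: "X \<in> carrier_mat a b" and Y: "Y \<in> carrier_mat b c"
  shows "frob_inner A (X * Y) = frob_inner (transpose_mat X * A) Y"
proof -
  have "frob_inner A (X * Y) = (\<Sum>i<a. \<Sum>k<c. A $$ (i,k) * (\<Sum>j<b. X $$ (i,j) * Y $$ (j,k)))"
    unfolding frob_inner_def using A X Y
    by (auto simp: scalar_prod_def row_def col_def atLeast0LessThan intro!: sum.cong)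
  also have "\<dots> = (\<Sum>i<a. \<Sum>k<c. \<Sum>j<b. X $$ (i,j) * A $$ (i,k) * Y $$ (j,k))"
    by (simp add: sum_distrib_left algebra_simps)
  also have "\<dots> = (\<Sum>i<a. \<Sum>j<b. \<Sum>k<c. X $$ (i,j) * A $$ (i,k) * Y $$ (j,k))"
    by (rule sum.cong[OF refl]) (rule sum.swap)
  also have "\<dots> = (\<Sum>j<b. \<Sum>i<a. \<Sum>k<c. X $$ (i,j) * A $$ (i,k) * Y $$ (j,k))"
    by (rule sum.swap)
  also have "\<dots> = (\<Sum>j<b. \<Sum>k<c. \<Sum>i<a. X $$ (i,j) * A $$ (i,k) * Y $$ (j,k))"
    by (rule sum.cong[OF refl]) (rule sum.swap)
  also have "\<dots> = (\<Sum>j<b. \<Sum>k<c. (\<Sum>i<a. X $$ (i,j) * A $$ (i,k)) * Y $$ (j,k))"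
    by (simp add: sum_distrib_right)
  also have "\<dots> = frob_inner (transpose_mat X * A) Y"
    unfolding frob_inner_def using A X Y
    by (auto simp: scalar_prod_def row_def col_def atLeast0LessThan intro!: sum.cong)
  finally show ?thesis .
qed

lemma frob_inner_self_eq_0:
  assumes A: "A \<in> carrier_mat a b" and f: "frob_inner A A = 0"
  shows "A = 0\<^sub>m a b"
proof (rule eq_matI)
  have nn: "\<And>i. (\<Sum>k<b. A $$ (i,k) * A $$ (i,k)) \<ge> 0" by (auto intro: sum_nonneg)
  have z: "(\<Sum>i<a. \<Sum>k<b. A $$ (i,k) * A $$ (i,k)) = 0" using f A unfolding frob_inner_def by simp
  fix i j assume ij: "i < dim_row (0\<^sub>m a b)" "j < dim_col (0\<^sub>m a b)"
  have "(\<Sum>k<b. A $$ (i,k) * A $$ (i,k)) = 0" using sum_nonneg_eq_0_iff[of "{..<a}", OF _ nn] z ij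
    by auto
  then have "A $$ (i,j) * A $$ (i,j) = 0"
    using sum_nonneg_eq_0_iff[of "{..<b}" "\<lambda>k. A $$ (i,k) * A $$ (i,k)"] ij by auto
  then show "A $$ (i,j) = 0\<^sub>m a b $$ (i,j)" using ij by simp
qed (use A in auto)

lemma frob_inner_add_right:
  assumes "A \<in> carrier_mat a b" "X \<in> carrier_mat a b" "Y \<in> carrier_mat a b"
  shows "frob_inner A (X + Y) = frob_inner A X + frob_inner A Y"
  using assms unfolding frob_inner_def by (auto simp: algebra_simps sum.distrib)

lemma frob_inner_commute:
  assumes "A \<in> carrier_mat a b" "X \<in> carrier_mat a b"
  shows "frob_inner A X = frob_inner X A"
  using assms unfolding frob_inner_def by (auto simp: algebra_simps)

lemma frob_inner_uminus_left: "frob_inner (- A) X = - frob_inner A X"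
  unfolding frob_inner_def by (auto simp: sum_negf)

lemma frob_inner_zero_left[simp]: "frob_inner (0\<^sub>m a b) Y = 0"
  unfolding frob_inner_def by simp

lemma tr_inner_eq_frob_inner:
  assumes "G \<in> carrier_mat a b" "V \<in> carrier_mat a b"
  shows "tr_inner G V = frob_inner G V"
proof -
  have "tr_inner G V = (\<Sum>i<b. \<Sum>j<a. G $$ (j,i) * V $$ (j,i))"
    using assms unfolding tr_inner_def mtrace_def
    by (auto simp: scalar_prod_def row_def col_def atLeast0LessThan intro!: sum.cong)
  also have "\<dots> = frob_inner G V" unfolding frob_inner_def using assms by (subst sum.swap) simp
  finally show ?thesis .
qed

lemma frob_inner_msum_left:
  assumes F: "\<And>j. j \<in> {1..J} \<Longrightarrow> F j \<in> carrier_mat m l" and R: "R \<in> carrier_mat m l"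
  shows "frob_inner (msum m l J F) R = (\<Sum>j\<in>{1..J}. frob_inner (F j) R)"
proof -
  have "frob_inner (msum m l J F) R = (\<Sum>i<m. \<Sum>k<l. \<Sum>j\<in>{1..J}. F j $$ (i,k) * R $$ (i,k))"
    unfolding frob_inner_def msum_def by (auto simp: sum_distrib_right intro!: sum.cong)
  also have "\<dots> = (\<Sum>i<m. \<Sum>j\<in>{1..J}. \<Sum>k<l. F j $$ (i,k) * R $$ (i,k))"
    by (rule sum.cong[OF refl]) (rule sum.swap)
  also have "\<dots> = (\<Sum>j\<in>{1..J}. \<Sum>i<m. \<Sum>k<l. F j $$ (i,k) * R $$ (i,k))"
    by (rule sum.swap)
  also have "\<dots> = (\<Sum>j\<in>{1..J}. frob_inner (F j) R)"
  proof (rule sum.cong[OF refl])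
    fix j assume j: "j \<in> {1..J}"
    have "dim_row (F j) = m" "dim_col (F j) = l" using F[OF j] by auto
    then show "(\<Sum>i<m. \<Sum>k<l. F j $$ (i,k) * R $$ (i,k)) = frob_inner (F j) R"
      unfolding frob_inner_def by simp
  qed
  finally show ?thesis .
qed


declare minus_carrier_mat[simp]

lemma transpose_mult_entry:
  assumes "A \<in> carrier_mat m l" "B \<in> carrier_mat m q" "i < l" "k < q"
  shows "(transpose_mat A * B) $$ (i,k) = (\<Sum>a<m. A $$ (a,i) * B $$ (a,k))"
  using assms by (auto simp: scalar_prod_def row_def col_def atLeast0LessThan intro!: sum.cong)

lemma gram_tangent_step:
  fixes Z D :: "real mat"
  assumes Z: "Z \<in> carrier_mat m l" and D: "D \<in> carrier_mat m l"
    and ZZ: "transpose_mat Z * Z = 1\<^sub>m l" and ZD: "transpose_mat Z * D = 0\<^sub>m l l"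
  shows "transpose_mat (Z + s \<cdot>\<^sub>m D) * (Z + s \<cdot>\<^sub>m D) = 1\<^sub>m l + (s^2) \<cdot>\<^sub>m (transpose_mat D * D)"
    "transpose_mat (Z + s \<cdot>\<^sub>m D) * Z = 1\<^sub>m l"
    "transpose_mat Z * (Z + s \<cdot>\<^sub>m D) = 1\<^sub>m l"
proof -
  have ZZe: "(\<Sum>a<m. Z $$ (a,i) * Z $$ (a,k)) = (if i = k then 1 else 0)" if "i < l" "k < l" for i k
    using arg_cong[OF ZZ, of "\<lambda>X. X $$ (i,k)"] transpose_mult_entry[OF Z Z that] that by simp
  have ZDe: "(\<Sum>a<m. Z $$ (a,i) * D $$ (a,k)) = 0" if "i < l" "k < l" for i k
    using arg_cong[OF ZD, of "\<lambda>X. X $$ (i,k)"] transpose_mult_entry[OF Z D that] that by simp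
  have ZDe': "(\<Sum>a<m. D $$ (a,i) * Z $$ (a,k)) = 0" if "i < l" "k < l" for i k
    using ZDe[OF that(2,1)] by (simp add: mult.commute)
  have W: "Z + s \<cdot>\<^sub>m D \<in> carrier_mat m l" using Z D by simp
  show "transpose_mat (Z + s \<cdot>\<^sub>m D) * (Z + s \<cdot>\<^sub>m D) = 1\<^sub>m l + (s^2) \<cdot>\<^sub>m (transpose_mat D * D)"
    (is "?L = ?R")
  proof (rule eq_matI)
    fix i k assume "i < dim_row ?R" "k < dim_col ?R"
    then have ik: "i < l" "k < l" using D by auto
    have "?L $$ (i,k) = (\<Sum>a<m. (Z $$ (a,i) + s * D $$ (a,i)) * (Z $$ (a,k) + s * D $$ (a,k)))"
      using transpose_mult_entry[OF W W ik] ik Z D by (auto intro!: sum.cong)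
    also have "\<dots> = (\<Sum>a<m. Z $$ (a,i) * Z $$ (a,k)) + s * (\<Sum>a<m. Z $$ (a,i) * D $$ (a,k))
        + s * (\<Sum>a<m. D $$ (a,i) * Z $$ (a,k)) + s^2 * (\<Sum>a<m. D $$ (a,i) * D $$ (a,k))"
      by (simp add: sum.distrib sum_distrib_left algebra_simps power2_eq_square)
    also have "\<dots> = ?R $$ (i,k)"
      using ZZe[OF ik] ZDe[OF ik] ZDe'[OF ik] transpose_mult_entry[OF D D ik] ik D by simp
    finally show "?L $$ (i,k) = ?R $$ (i,k)" .
  qed (use Z D in auto)
  show "transpose_mat (Z + s \<cdot>\<^sub>m D) * Z = 1\<^sub>m l"
  proof (rule eq_matI)
    fix i k assume ik: "i < dim_row (1\<^sub>m l)" "k < dim_col (1\<^sub>m l)"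
    then have ik: "i < l" "k < l" by auto
    have "(transpose_mat (Z + s \<cdot>\<^sub>m D) * Z) $$ (i,k)
      = (\<Sum>a<m. (Z $$ (a,i) + s * D $$ (a,i)) * Z $$ (a,k))"
      using transpose_mult_entry[OF W Z ik] ik Z D by (auto intro!: sum.cong)
    also have "\<dots> = (\<Sum>a<m. Z $$ (a,i) * Z $$ (a,k)) + s * (\<Sum>a<m. D $$ (a,i) * Z $$ (a,k))"
      by (simp add: sum.distrib sum_distrib_left algebra_simps)
    also have "\<dots> = 1\<^sub>m l $$ (i,k)" using ZZe[OF ik] ZDe'[OF ik] ik by simp
    finally show "(transpose_mat (Z + s \<cdot>\<^sub>m D) * Z) $$ (i,k) = 1\<^sub>m l $$ (i,k)" .
  qed (use Z D in auto)
  show "transpose_mat Z * (Z + s \<cdot>\<^sub>m D) = 1\<^sub>m l"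
  proof (rule eq_matI)
    fix i k assume ik: "i < dim_row (1\<^sub>m l)" "k < dim_col (1\<^sub>m l)"
    then have ik: "i < l" "k < l" by auto
    have "(transpose_mat Z * (Z + s \<cdot>\<^sub>m D)) $$ (i,k)
      = (\<Sum>a<m. Z $$ (a,i) * (Z $$ (a,k) + s * D $$ (a,k)))"
      using transpose_mult_entry[OF Z W ik] ik Z D by (auto intro!: sum.cong)
    also have "\<dots> = (\<Sum>a<m. Z $$ (a,i) * Z $$ (a,k)) + s * (\<Sum>a<m. Z $$ (a,i) * D $$ (a,k))"
      by (simp add: sum.distrib sum_distrib_left algebra_simps)
    also have "\<dots> = 1\<^sub>m l $$ (i,k)" using ZZe[OF ik] ZDe[OF ik] ik by simp
    finally show "(transpose_mat Z * (Z + s \<cdot>\<^sub>m D)) $$ (i,k) = 1\<^sub>m l $$ (i,k)" .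
  qed (use Z D in auto)
qed

lemma gram_two_smult_minus:
  fixes X Y :: "real mat"
  assumes X: "X \<in> carrier_mat m l" and Y: "Y \<in> carrier_mat m l"
  shows "transpose_mat (2 \<cdot>\<^sub>m X - Y) * (2 \<cdot>\<^sub>m X - Y) =
     4 \<cdot>\<^sub>m (transpose_mat X * X) - 2 \<cdot>\<^sub>m (transpose_mat X * Y) - 2 \<cdot>\<^sub>m (transpose_mat Y * X)
       + transpose_mat Y * Y" (is "?L = ?R")
proof (rule eq_matI)
  have W: "2 \<cdot>\<^sub>m X - Y \<in> carrier_mat m l" using X Y by simp
  fix i k assume "i < dim_row ?R" "k < dim_col ?R"
  then have ik: "i < l" "k < l" using X Y by auto
  have "?L $$ (i,k) = (\<Sum>a<m. (2 * X $$ (a,i) - Y $$ (a,i)) * (2 * X $$ (a,k) - Y $$ (a,k)))"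
    using transpose_mult_entry[OF W W ik] ik X Y by (auto intro!: sum.cong)
  also have "\<dots> = 4 * (\<Sum>a<m. X $$ (a,i) * X $$ (a,k)) - 2 * (\<Sum>a<m. X $$ (a,i) * Y $$ (a,k))
      - 2 * (\<Sum>a<m. Y $$ (a,i) * X $$ (a,k)) + (\<Sum>a<m. Y $$ (a,i) * Y $$ (a,k))"
    by (simp add: sum.distrib sum_distrib_left sum_subtractf algebra_simps)
  also have "\<dots> = ?R $$ (i,k)"
    using transpose_mult_entry[OF X X ik] transpose_mult_entry[OF X Y ik]
      transpose_mult_entry[OF Y X ik] transpose_mult_entry[OF Y Y ik] ik X Y by simp
  finally show "?L $$ (i,k) = ?R $$ (i,k)" .
qed (use X Y in auto)

lemma l1_norm_mat_one: "l1_norm_mat (1\<^sub>m l) = real l"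
proof -
  have "l1_norm_mat (1\<^sub>m l) = (\<Sum>i<l. \<Sum>k<l. if i = k then 1 else 0)"
    unfolding l1_norm_mat_def by (auto intro!: sum.cong)
  also have "\<dots> = (\<Sum>i<l. 1)" by (auto intro!: sum.cong simp: sum.delta)
  finally show ?thesis by simp
qed

lemma one_plus_small_mult_vec_eq_0:
  fixes M :: "real mat"
  assumes M: "M \<in> carrier_mat l l" and small: "c * l1_norm_mat M \<le> 1/2" and c: "c \<ge> 0"
    and v: "v \<in> carrier_vec l" and Nv: "(1\<^sub>m l + c \<cdot>\<^sub>m M) *\<^sub>v v = 0\<^sub>v l"
  shows "v = 0\<^sub>v l"
proof -
  have e: "v $ i = - c * (\<Sum>j<l. M $$ (i,j) * v $ j)" if i: "i < l" for i
  proof -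
    have "((1\<^sub>m l + c \<cdot>\<^sub>m M) *\<^sub>v v) $ i = (\<Sum>j<l. ((if i = j then 1 else 0) + c * M $$ (i,j)) * v $ j)"
      using M v i by (auto simp: scalar_prod_def atLeast0LessThan intro!: sum.cong)
    also have "\<dots> = (\<Sum>j<l. (if i = j then v $ j else 0) + c * (M $$ (i,j) * v $ j))"
      by (intro sum.cong refl) (simp add: algebra_simps)
    also have "\<dots> = v $ i + c * (\<Sum>j<l. M $$ (i,j) * v $ j)"
      using i by (simp add: sum.distrib sum_distrib_left)
    finally show ?thesis using Nv i by simp
  qed
  define S where "S = (\<Sum>i<l. \<bar>v $ i\<bar>)"
  have "S \<le> (\<Sum>i<l. c * (\<Sum>j<l. \<bar>M $$ (i,j)\<bar> * \<bar>v $ j\<bar>))"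
    unfolding S_def
  proof (rule sum_mono)
    fix i assume "i \<in> {..<l}"
    then have "\<bar>v $ i\<bar> = c * \<bar>\<Sum>j<l. M $$ (i,j) * v $ j\<bar>" using e c by (simp add: abs_mult)
    also have "\<dots> \<le> c * (\<Sum>j<l. \<bar>M $$ (i,j)\<bar> * \<bar>v $ j\<bar>)"
      using c by (intro mult_left_mono order.trans[OF sum_abs]) (auto simp: abs_mult)
    finally show "\<bar>v $ i\<bar> \<le> c * (\<Sum>j<l. \<bar>M $$ (i,j)\<bar> * \<bar>v $ j\<bar>)" .
  qed
  also have "\<dots> = c * (\<Sum>j<l. (\<Sum>i<l. \<bar>M $$ (i,j)\<bar>) * \<bar>v $ j\<bar>)"
  proof -
    have sw: "(\<Sum>i<l. \<Sum>j<l. \<bar>M $$ (i,j)\<bar> * \<bar>v $ j\<bar>) = (\<Sum>j<l. (\<Sum>i<l. \<bar>M $$ (i,j)\<bar>) * \<bar>v $ j\<bar>)"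
      by (subst sum.swap) (simp add: sum_distrib_right)
    show ?thesis by (simp add: sum_distrib_left[symmetric] sw)
  qed
  also have "\<dots> \<le> c * (\<Sum>j<l. l1_norm_mat M * \<bar>v $ j\<bar>)"
  proof (intro mult_left_mono sum_mono mult_right_mono c)
    fix j assume j: "j \<in> {..<l}"
    have "(\<Sum>i<l. \<bar>M $$ (i,j)\<bar>) = (\<Sum>i<l. \<Sum>k\<in>{j}. \<bar>M $$ (i,k)\<bar>)" by simp
    also have "\<dots> \<le> (\<Sum>i<l. \<Sum>k<l. \<bar>M $$ (i,k)\<bar>)"
      using j by (intro sum_mono sum_mono2) auto
    finally show "(\<Sum>i<l. \<bar>M $$ (i,j)\<bar>) \<le> l1_norm_mat M" unfolding l1_norm_mat_def using M by simp
  qed simp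
  also have "\<dots> = (c * l1_norm_mat M) * S" unfolding S_def
    by (simp add: sum_distrib_left algebra_simps)
  also have "\<dots> \<le> 1/2 * S" using small
    by (intro mult_right_mono) (auto simp: S_def intro: sum_nonneg)
  finally have "S \<le> 0" by simp
  then have "\<forall>i\<in>{..<l}. \<bar>v $ i\<bar> = 0"
    unfolding S_def by (subst sum_nonneg_eq_0_iff[symmetric]) (auto intro: antisym sum_nonneg)
  then show ?thesis using v by (intro eq_vecI) auto
qed

lemma symmetric_inverse_of_small_perturbation:
  fixes N M :: "real mat"
  assumes Mc: "M \<in> carrier_mat l l" and NM: "N = 1\<^sub>m l + s^2 \<cdot>\<^sub>m M" and NT: "transpose_mat N = N"
    and small: "s^2 * l1_norm_mat M \<le> 1/2"
  obtains Ni where "Ni \<in> carrier_mat l l" "N * Ni = 1\<^sub>m l" "transpose_mat Ni = Ni"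
    "l1_norm_mat (Ni - 1\<^sub>m l) \<le> 2 * real l * s^2 * l1_norm_mat M"
proof -
  have Nc: "N \<in> carrier_mat l l" unfolding NM using Mc by simp
  have "det N \<noteq> 0"
  proof
    assume "det N = 0"
    then obtain v where v: "v \<in> carrier_vec l" "v \<noteq> 0\<^sub>v l" "N *\<^sub>v v = 0\<^sub>v l"
      using det_0_iff_vec_prod_zero[OF Nc] by blast
    have "v = 0\<^sub>v l" using one_plus_small_mult_vec_eq_0[OF Mc small _ v(1)] v(3) unfolding NM by simp
    then show False using v(2) by simp
  qed
  then obtain Ni where Nic: "Ni \<in> carrier_mat l l" and NNi: "N * Ni = 1\<^sub>m l" and NiN: "Ni * N = 1\<^sub>m l"
    using det_non_zero_imp_unit[OF Nc, of "()"] unfolding Units_def ring_mat_def by auto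
  have "transpose_mat Ni * N = 1\<^sub>m l"
    using arg_cong[OF NNi, of transpose_mat] Nic Nc NT by (simp add: transpose_mult[of _ l l _ l])
  then have "transpose_mat Ni * (N * Ni) = Ni"
    using Nic Nc by (simp add: assoc_mult_mat[of "transpose_mat Ni" l l N l Ni l, symmetric]
      del: assoc_mult_mat)
  then have NiT: "transpose_mat Ni = Ni" using NNi Nic by simp
  have Nim1: "Ni - 1\<^sub>m l = - (s^2) \<cdot>\<^sub>m (Ni * M)"
  proof -
    have "Ni - 1\<^sub>m l = Ni * 1\<^sub>m l - Ni * N" using NiN Nic by simp
    also have "\<dots> = Ni * (1\<^sub>m l - N)"
      by (rule mult_minus_distrib_mat[OF Nic one_carrier_mat Nc, symmetric])
    also have "1\<^sub>m l - N = (- (s^2)) \<cdot>\<^sub>m M" unfolding NM by (rule eq_matI) (use Mc in auto)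
    also have "Ni * \<dots> = - (s^2) \<cdot>\<^sub>m (Ni * M)" using Nic Mc
      by (simp add: mult_smult_distrib[of _ l l])
    finally show ?thesis .
  qed
  have l1_Nim1: "l1_norm_mat (Ni - 1\<^sub>m l) \<le> s^2 * (l1_norm_mat Ni * l1_norm_mat M)"
    unfolding Nim1 l1_norm_mat_smult using l1_norm_mat_mult_le[OF Nic Mc]
      by (simp add: mult_left_mono)
  have l1_Ni: "l1_norm_mat Ni \<le> 2 * real l"
  proof -
    have "Ni = 1\<^sub>m l + (Ni - 1\<^sub>m l)" by (rule eq_matI) (use Nic in auto)
    then have "l1_norm_mat Ni \<le> real l + (s^2 * l1_norm_mat M) * l1_norm_mat Ni"
      using l1_norm_mat_add_le[of "1\<^sub>m l" l l "Ni - 1\<^sub>m l"] l1_Nim1 Nic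
      by (simp add: l1_norm_mat_one algebra_simps)
    moreover have "(s^2 * l1_norm_mat M) * l1_norm_mat Ni \<le> 1/2 * l1_norm_mat Ni"
      using small by (intro mult_right_mono l1_norm_mat_nonneg)
    ultimately show ?thesis by simp
  qed
  show thesis
  proof (rule that[OF Nic NNi NiT])
    have "s^2 * (l1_norm_mat Ni * l1_norm_mat M) \<le> s^2 * (2 * real l * l1_norm_mat M)"
      using l1_Ni by (intro mult_left_mono mult_right_mono l1_norm_mat_nonneg) auto
    then show "l1_norm_mat (Ni - 1\<^sub>m l) \<le> 2 * real l * s^2 * l1_norm_mat M"
      using l1_Nim1 by (simp add: algebra_simps)
  qed
qed

(* With P = W Ni one has P^T P = P^T Z = Z^T P = Ni, so the cross terms of (2 P - Z)^T (2 P - Z)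
   cancel the quadratic one. *)
lemma orthonormal_reflection:
  fixes Z W Ni :: "real mat"
  assumes Z: "Z \<in> carrier_mat m l" and W: "W \<in> carrier_mat m l" and Nic: "Ni \<in> carrier_mat l l"
    and ZZ: "transpose_mat Z * Z = 1\<^sub>m l" and WZ: "transpose_mat W * Z = 1\<^sub>m l"
    and ZW: "transpose_mat Z * W = 1\<^sub>m l" and NNi: "(transpose_mat W * W) * Ni = 1\<^sub>m l"
    and NiT: "transpose_mat Ni = Ni"
  shows "transpose_mat (2 \<cdot>\<^sub>m (W * Ni) - Z) * (2 \<cdot>\<^sub>m (W * Ni) - Z) = 1\<^sub>m l"
proof -
  define P where "P = W * Ni"
  have Pc: "P \<in> carrier_mat m l" unfolding P_def using W Nic by simp
  have PT: "transpose_mat P = Ni * transpose_mat W"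
    unfolding P_def using W Nic NiT by (simp add: transpose_mult[of _ m l _ l])
  have PP: "transpose_mat P * P = Ni"
  proof -
    have "transpose_mat P * P = Ni * transpose_mat W * (W * Ni)"
      unfolding P_def using W Nic NiT by (simp add: transpose_mult[of _ m l _ l])
    also have "\<dots> = Ni * ((transpose_mat W * W) * Ni)"
      using W Nic by (simp add: assoc_mult_mat[of Ni l l "transpose_mat W" m "W * Ni" l]
          assoc_mult_mat[of "transpose_mat W" l m W l Ni l])
    finally show ?thesis using NNi Nic by simp
  qed
  have PZ: "transpose_mat P * Z = Ni"
    unfolding PT using W Nic Z WZ by (simp add: assoc_mult_mat[of _ l l _ m _ l])
  have ZP: "transpose_mat Z * P = Ni"
    unfolding P_def using W Nic Z ZW by (simp add: assoc_mult_mat[of _ l m _ l _ l, symmetric])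
  show ?thesis
    unfolding P_def[symmetric] gram_two_smult_minus[OF Pc Z] PP PZ ZP ZZ
    by (rule eq_matI) (use Nic in auto)
qed

(* The witness is 2 W (W^T W)^-1 - Z with W = Z + s D; it agrees with Z + 2 s D up to O(s^2). *)
lemma stiefel_retraction:
  fixes Z D :: "real mat"
  assumes Z: "Z \<in> carrier_mat m l" and D: "D \<in> carrier_mat m l"
    and ZZ: "transpose_mat Z * Z = 1\<^sub>m l" and ZD: "transpose_mat Z * D = 0\<^sub>m l l"
    and s: "0 < s" "s^2 * l1_norm_mat (transpose_mat D * D) \<le> 1/2"
  shows "\<exists>Zt. Zt \<in> carrier_mat m l \<and> transpose_mat Zt * Zt = 1\<^sub>m l \<and>
     l1_norm_mat (Zt - Z - (2*s) \<cdot>\<^sub>m D)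
       \<le> 4 * real l * (l1_norm_mat Z + s * l1_norm_mat D) * l1_norm_mat (transpose_mat D * D) * s^2"
proof -
  define M where "M = transpose_mat D * D"
  have Mc: "M \<in> carrier_mat l l" unfolding M_def using D by simp
  define W where "W = Z + s \<cdot>\<^sub>m D"
  have Wc: "W \<in> carrier_mat m l" unfolding W_def using Z D by simp
  have NM: "transpose_mat W * W = 1\<^sub>m l + s^2 \<cdot>\<^sub>m M"
    unfolding W_def M_def by (rule gram_tangent_step(1)[OF Z D ZZ ZD])
  have NT: "transpose_mat (transpose_mat W * W) = transpose_mat W * W"
    using Wc by (simp add: transpose_mult[of _ l m _ l])
  obtain Ni where Nic: "Ni \<in> carrier_mat l l" and NNi: "(transpose_mat W * W) * Ni = 1\<^sub>m l"
    and NiT: "transpose_mat Ni = Ni" and l1_Nim1: "l1_norm_mat (Ni - 1\<^sub>m l)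
      \<le> 2 * real l * s^2 * l1_norm_mat M"
    using symmetric_inverse_of_small_perturbation[OF Mc NM NT] s(2) unfolding M_def by blast
  define Zt where "Zt = 2 \<cdot>\<^sub>m (W * Ni) - Z"
  have orth: "transpose_mat Zt * Zt = 1\<^sub>m l"
    unfolding Zt_def W_def
    by (rule orthonormal_reflection[OF Z _ Nic ZZ gram_tangent_step(2,3)[OF Z D ZZ ZD] _ NiT])
      (use D Z NNi[unfolded W_def] in simp_all)
  have "Zt - Z - (2*s) \<cdot>\<^sub>m D = 2 \<cdot>\<^sub>m (W * (Ni - 1\<^sub>m l))"
  proof -
    have "W * (Ni - 1\<^sub>m l) = W * Ni - W" using Wc Nic by (simp add: mult_minus_distrib_mat[of _ m l])
    moreover have "Zt - Z - (2*s) \<cdot>\<^sub>m D = 2 \<cdot>\<^sub>m (W * Ni - W)"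
      unfolding Zt_def W_def by (rule eq_matI) (use Wc Nic Z D in \<open>auto simp: algebra_simps\<close>)
    ultimately show ?thesis by simp
  qed
  then have "l1_norm_mat (Zt - Z - (2*s) \<cdot>\<^sub>m D) \<le> 2 * (l1_norm_mat W * l1_norm_mat (Ni - 1\<^sub>m l))"
    using l1_norm_mat_mult_le[OF Wc, of "Ni - 1\<^sub>m l" l] Nic by (simp add: l1_norm_mat_smult)
  also have "\<dots> \<le> 2 * ((l1_norm_mat Z + s * l1_norm_mat D) * (2 * real l * s^2 * l1_norm_mat M))"
  proof -
    have "l1_norm_mat W \<le> l1_norm_mat Z + s * l1_norm_mat D"
      unfolding W_def using l1_norm_mat_add_le[OF Z smult_carrier_mat[OF D], of s] s
      by (simp add: l1_norm_mat_smult)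
    then show ?thesis
      using l1_Nim1 s(1) l1_norm_mat_nonneg[of Z] l1_norm_mat_nonneg[of D]
      by (intro mult_left_mono mult_mono l1_norm_mat_nonneg) auto
  qed
  also have "\<dots>
    = 4 * real l * (l1_norm_mat Z + s * l1_norm_mat D) * l1_norm_mat (transpose_mat D * D) * s^2"
    unfolding M_def by (simp add: algebra_simps)
  finally have "l1_norm_mat (Zt - Z - (2*s) \<cdot>\<^sub>m D)
      \<le> 4 * real l * (l1_norm_mat Z + s * l1_norm_mat D) * l1_norm_mat (transpose_mat D * D) * s^2" .
  moreover have "Zt \<in> carrier_mat m l" unfolding Zt_def using Wc Nic Z by simp
  ultimately show ?thesis using orth by blast
qed

definition abs_dir_deriv :: "real \<Rightarrow> real \<Rightarrow> real" where
  "abs_dir_deriv a y = (if a = 0 then \<bar>y\<bar> else sgn a * y)"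

lemma abs_dir_deriv_add_le: "abs_dir_deriv a (u + v) \<le> abs_dir_deriv a u + abs_dir_deriv a v"
  unfolding abs_dir_deriv_def by (auto simp: algebra_simps abs_triangle_ineq)

lemma abs_dir_deriv_scale: "c \<ge> 0 \<Longrightarrow> abs_dir_deriv a (c * u) = c * abs_dir_deriv a u"
  unfolding abs_dir_deriv_def by (auto simp: abs_mult)

lemma abs_add_eventually_linear:
  "eventually (\<lambda>t. \<bar>w + t * e\<bar> = \<bar>w\<bar> + t * abs_dir_deriv w e) (at_right (0::real))"
proof (cases "w = 0")
  case True
  show ?thesis using eventually_at_right_less[of "0::real"]
    by eventually_elim (simp add: True abs_dir_deriv_def abs_mult)
next
  case False
  show ?thesis unfolding eventually_at_right_field
  proof (intro exI[of _ "\<bar>w\<bar> / (\<bar>e\<bar> + 1)"] conjI allI impI)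
    show "0 < \<bar>w\<bar> / (\<bar>e\<bar> + 1)" using False by simp
    fix t :: real assume t: "0 < t" "t < \<bar>w\<bar> / (\<bar>e\<bar> + 1)"
    have "t * (\<bar>e\<bar> + 1) < \<bar>w\<bar>" using t by (simp add: field_simps)
    then have "\<bar>t * e\<bar> < \<bar>w\<bar>" using t by (simp add: algebra_simps abs_mult)
    then show "\<bar>w + t * e\<bar> = \<bar>w\<bar> + t * abs_dir_deriv w e"
      using False unfolding abs_dir_deriv_def by (cases "w > 0") (auto simp: abs_if sgn_if split: if_splits)
  qed
qed

definition l1_mat_dir_deriv :: "real mat \<Rightarrow> real mat \<Rightarrow> real" where
  "l1_mat_dir_deriv W V = (\<Sum>i<dim_row W. \<Sum>k<dim_col W. abs_dir_deriv (W $$ (i,k)) (V $$ (i,k)))"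

lemma l1_norm_mat_add_eventually_linear:
  assumes W: "W \<in> carrier_mat nr nc" and V: "V \<in> carrier_mat nr nc"
  shows "eventually (\<lambda>t. l1_norm_mat (W + t \<cdot>\<^sub>m V) = l1_norm_mat W + t * l1_mat_dir_deriv W V)
           (at_right (0::real))"
proof -
  have "eventually (\<lambda>t. \<forall>i\<in>{..<nr}. \<forall>k\<in>{..<nc}.
      \<bar>W $$ (i,k) + t * V $$ (i,k)\<bar> = \<bar>W $$ (i,k)\<bar> + t * abs_dir_deriv (W $$ (i,k)) (V $$ (i,k)))
      (at_right 0)"
    by (intro eventually_ball_finite ballI) (auto intro: abs_add_eventually_linear)
  then show ?thesis
  proof eventually_elim
    case (elim t)
    have "l1_norm_mat (W + t \<cdot>\<^sub>m V) = (\<Sum>i<nr. \<Sum>k<nc. \<bar>W $$ (i,k) + t * V $$ (i,k)\<bar>)"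
      unfolding l1_norm_mat_def using W V by (auto intro!: sum.cong)
    also have "\<dots> = (\<Sum>i<nr. \<Sum>k<nc. \<bar>W $$ (i,k)\<bar> + t * abs_dir_deriv (W $$ (i,k)) (V $$ (i,k)))"
      using elim by (auto intro!: sum.cong)
    also have "\<dots> = l1_norm_mat W + t * l1_mat_dir_deriv W V"
      unfolding l1_norm_mat_def l1_mat_dir_deriv_def using W by (simp add: sum.distrib sum_distrib_left)
    finally show ?case .
  qed
qed

lemma subdiff_l1I:
  assumes W: "W \<in> carrier_mat nr nc" and G: "G \<in> carrier_mat nr nc"
    and coords: "\<And>i k. i < nr \<Longrightarrow> k < nc \<Longrightarrow>
      G $$ (i,k) \<le> abs_dir_deriv (W $$ (i,k)) 1 \<and> - G $$ (i,k) \<le> abs_dir_deriv (W $$ (i,k)) (-1)"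
  shows "G \<in> subdiff_l1 W"
  unfolding subdiff_l1_def
proof (intro CollectI conjI ballI)
  show "G \<in> carrier_mat (dim_row W) (dim_col W)" using W G by simp
  fix V :: "real mat" assume V: "V \<in> carrier_mat (dim_row W) (dim_col W)"
  then have Vc: "V \<in> carrier_mat nr nc" using W by simp
  have "l1_norm_mat W + tr_inner G (V - W)
      = (\<Sum>i<nr. \<Sum>k<nc. \<bar>W $$ (i,k)\<bar> + G $$ (i,k) * (V $$ (i,k) - W $$ (i,k)))"
    unfolding tr_inner_eq_frob_inner[OF G minus_carrier_mat[OF W]] l1_norm_mat_def frob_inner_def
    using W G Vc by (simp add: sum.distrib)
  also have "\<dots> \<le> (\<Sum>i<nr. \<Sum>k<nc. \<bar>V $$ (i,k)\<bar>)"
  proof (intro sum_mono)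
    fix i k assume ik: "i \<in> {..<nr}" "k \<in> {..<nc}"
    have c: "G $$ (i,k) \<le> abs_dir_deriv (W $$ (i,k)) 1" "- G $$ (i,k)
      \<le> abs_dir_deriv (W $$ (i,k)) (-1)"
      using coords ik by auto
    show "\<bar>W $$ (i,k)\<bar> + G $$ (i,k) * (V $$ (i,k) - W $$ (i,k)) \<le> \<bar>V $$ (i,k)\<bar>"
    proof (cases "W $$ (i,k) = 0")
      case True
      then have "\<bar>G $$ (i,k)\<bar> \<le> 1" using c unfolding abs_dir_deriv_def by auto
      then have "G $$ (i,k) * V $$ (i,k) \<le> \<bar>V $$ (i,k)\<bar>"
        using abs_mult[of "G $$ (i,k)" "V $$ (i,k)"]
          mult_right_mono[of "\<bar>G $$ (i,k)\<bar>" 1 "\<bar>V $$ (i,k)\<bar>"]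
        by (auto simp: abs_le_iff)
      then show ?thesis using True by simp
    next
      case False
      then have g: "G $$ (i,k) = sgn (W $$ (i,k))" using c unfolding abs_dir_deriv_def by auto
      have "\<bar>W $$ (i,k)\<bar> + sgn (W $$ (i,k)) * (V $$ (i,k) - W $$ (i,k))
        = sgn (W $$ (i,k)) * V $$ (i,k)"
        by (simp add: algebra_simps abs_if sgn_if)
      also have "\<dots> \<le> \<bar>V $$ (i,k)\<bar>" by (auto simp: sgn_if)
      finally show ?thesis using g by simp
    qed
  qed
  also have "\<dots> = l1_norm_mat V" unfolding l1_norm_mat_def using Vc by simp
  finally show "l1_norm_mat W + tr_inner G (V - W) \<le> l1_norm_mat V" .
qed

lemma transpose_mult_cancel:
  fixes P B R :: "real mat"
  assumes Pc: "P \<in> carrier_mat nn rr" and PP: "transpose_mat P * P = 1\<^sub>m rr"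
    and Bc: "B \<in> carrier_mat rr m" and Rc: "R \<in> carrier_mat m l"
  shows "transpose_mat P * ((- (P * B)) * R) = - (B * R)"
proof -
  have "transpose_mat P * ((- (P * B)) * R) = - (transpose_mat P * (P * (B * R)))"
    using Pc Bc Rc by simp
  also have "transpose_mat P * (P * (B * R)) = (transpose_mat P * P) * (B * R)"
    using Pc Bc Rc
    by (simp add: assoc_mult_mat[of "transpose_mat P" rr nn P rr "B * R" l, symmetric]
      del: assoc_mult_mat)
  finally show ?thesis using PP Bc Rc by simp
qed

lemma transpose_mult_proj_complement:
  fixes P G :: "real mat"
  assumes Pc: "P \<in> carrier_mat nn rr" and PP: "transpose_mat P * P
    = 1\<^sub>m rr" and Gc: "G \<in> carrier_mat nn l"
  shows "transpose_mat P * (G - P * (transpose_mat P * G)) = 0\<^sub>m rr l"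
proof -
  have PT: "transpose_mat P \<in> carrier_mat rr nn" using Pc by simp
  have "transpose_mat P * (G - P * (transpose_mat P * G))
      = transpose_mat P * G - transpose_mat P * (P * (transpose_mat P * G))"
    by (rule mult_minus_distrib_mat[OF PT Gc]) (use Pc Gc in simp)
  also have "transpose_mat P * (P * (transpose_mat P * G))
    = (transpose_mat P * P) * (transpose_mat P * G)"
    using Pc Gc
    by (simp add: assoc_mult_mat[of "transpose_mat P" rr nn P rr "transpose_mat P * G" l, symmetric]
        del: assoc_mult_mat)
  also have "\<dots> = transpose_mat P * G" using PP Pc Gc by simp
  finally show ?thesis using Pc Gc by simp
qed

lemma eq_proj_if_orthogonal_to_kernel:
  fixes P G :: "real mat"
  assumes Pc: "P \<in> carrier_mat nn rr" and PP: "transpose_mat P * P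
    = 1\<^sub>m rr" and Gc: "G \<in> carrier_mat nn l"
    and orth: "\<And>K. K \<in> carrier_mat nn l \<Longrightarrow> transpose_mat P * K = 0\<^sub>m rr l \<Longrightarrow> frob_inner K G = 0"
  shows "G = P * (transpose_mat P * G)"
proof -
  define K where "K = G - P * (transpose_mat P * G)"
  have Kc: "K \<in> carrier_mat nn l" unfolding K_def using Gc Pc by simp
  have PK: "transpose_mat P * K = 0\<^sub>m rr l"
    unfolding K_def by (rule transpose_mult_proj_complement[OF Pc PP Gc])
  have PGc: "transpose_mat P * G \<in> carrier_mat rr l" using Pc Gc by simp
  have "G = K + P * (transpose_mat P * G)"
    unfolding K_def by (rule eq_matI) (use Gc Pc in auto)
  then have "frob_inner K G = frob_inner K K + frob_inner K (P * (transpose_mat P * G))"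
    using frob_inner_add_right[OF Kc Kc, of "P * (transpose_mat P * G)"] Pc PGc by simp
  also have "frob_inner K (P * (transpose_mat P * G))
    = frob_inner (transpose_mat P * K) (transpose_mat P * G)"
    by (rule frob_inner_mult_right[OF Kc Pc PGc])
  finally have "frob_inner K K = 0" using orth[OF Kc PK] unfolding PK frob_inner_zero_left by simp
  then have "K = 0\<^sub>m nn l" by (rule frob_inner_self_eq_0[OF Kc])
  show ?thesis
  proof (rule eq_matI)
    fix i k assume "i < dim_row (P * (transpose_mat P * G))" "k < dim_col (P * (transpose_mat P * G))"
    then have ik: "i < nn" "k < l" using Pc Gc by auto
    show "G $$ (i,k) = (P * (transpose_mat P * G)) $$ (i,k)"
      using arg_cong[OF \<open>K = 0\<^sub>m nn l\<close>, of "\<lambda>X. X $$ (i,k)"] ik Pc Gc unfolding K_def by simp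
  qed (use Pc Gc in auto)
qed

lemma feasible_correction:
  fixes P B Ws D Zs DZ E :: "real mat"
  assumes Pc: "P \<in> carrier_mat nn rr" and PP: "transpose_mat P * P
    = 1\<^sub>m rr" and Bc: "B \<in> carrier_mat rr m"
    and Wc: "Ws \<in> carrier_mat nn l" and Dc: "D \<in> carrier_mat nn l" and Zc: "Zs \<in> carrier_mat m l"
    and DZc: "DZ \<in> carrier_mat m l" and Ec: "E \<in> carrier_mat m l"
    and h1: "transpose_mat P * Ws + B * Zs = 0\<^sub>m rr l" and h2: "transpose_mat P * D + B * DZ
      = 0\<^sub>m rr l"
  shows "transpose_mat P * (Ws + t \<cdot>\<^sub>m D + (- (P * B)) * E) + B * (Zs + t \<cdot>\<^sub>m DZ + E) = 0\<^sub>m rr l"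
proof -
  have PT: "transpose_mat P \<in> carrier_mat rr nn" using Pc by simp
  have PBE: "transpose_mat P * ((- (P * B)) * E) = - (B * E)"
    by (rule transpose_mult_cancel[OF Pc PP Bc Ec])
  have Xc: "(- (P * B)) * E \<in> carrier_mat nn l" using Pc Bc Ec by simp
  have 1: "transpose_mat P * (Ws + t \<cdot>\<^sub>m D + (- (P * B)) * E) =
      transpose_mat P * Ws + t \<cdot>\<^sub>m (transpose_mat P * D) + - (B * E)"
  proof -
    have "transpose_mat P * (Ws + t \<cdot>\<^sub>m D + (- (P * B)) * E)
      = transpose_mat P * (Ws + t \<cdot>\<^sub>m D) + transpose_mat P * ((- (P * B)) * E)"
      by (rule mult_add_distrib_mat[OF PT _ Xc]) (use Wc Dc in simp)
    also have "transpose_mat P * (Ws + t \<cdot>\<^sub>m D) = transpose_mat P * Ws + transpose_mat P * (t \<cdot>\<^sub>m D)"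
      by (rule mult_add_distrib_mat[OF PT Wc]) (use Dc in simp)
    also have "transpose_mat P * (t \<cdot>\<^sub>m D) = t \<cdot>\<^sub>m (transpose_mat P * D)"
      by (rule mult_smult_distrib[OF PT Dc])
    finally show ?thesis unfolding PBE .
  qed
  have 2: "B * (Zs + t \<cdot>\<^sub>m DZ + E) = B * Zs + t \<cdot>\<^sub>m (B * DZ) + B * E"
  proof -
    have "B * (Zs + t \<cdot>\<^sub>m DZ + E) = B * (Zs + t \<cdot>\<^sub>m DZ) + B * E"
      by (rule mult_add_distrib_mat[OF Bc _ Ec]) (use Zc DZc in simp)
    also have "B * (Zs + t \<cdot>\<^sub>m DZ) = B * Zs + B * (t \<cdot>\<^sub>m DZ)"
      by (rule mult_add_distrib_mat[OF Bc Zc]) (use DZc in simp)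
    also have "B * (t \<cdot>\<^sub>m DZ) = t \<cdot>\<^sub>m (B * DZ)" by (rule mult_smult_distrib[OF Bc DZc])
    finally show ?thesis .
  qed
  show ?thesis unfolding 1 2
  proof (rule eq_matI)
    fix i k assume ik: "i < dim_row (0\<^sub>m rr l)" "k < dim_col (0\<^sub>m rr l)"
    have e1: "(transpose_mat P * Ws) $$ (i,k) + (B * Zs) $$ (i,k) = 0"
      using arg_cong[OF h1, of "\<lambda>X. X $$ (i,k)"] ik Pc Wc Bc Zc by simp
    have e2: "(transpose_mat P * D) $$ (i,k) + (B * DZ) $$ (i,k) = 0"
      using arg_cong[OF h2, of "\<lambda>X. X $$ (i,k)"] ik Pc Dc Bc DZc by simp
    have e2t: "t * (transpose_mat P * D) $$ (i,k) + t * (B * DZ) $$ (i,k) = 0"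
      using e2 by (simp only: distrib_left[symmetric])
    show "(transpose_mat P * Ws + t \<cdot>\<^sub>m (transpose_mat P * D) + - (B * E)
        + (B * Zs + t \<cdot>\<^sub>m (B * DZ) + B * E)) $$ (i,k) = 0\<^sub>m rr l $$ (i,k)"
      using ik Pc Wc Bc Zc Dc DZc Ec e1 e2t by (simp add: algebra_simps)
  qed (use Pc Wc Bc Zc Ec in auto)
qed

(* Zs^T DZ = 0 is stronger than tangency to the Stiefel manifold (Zs^T DZ skew), but these
   directions already force the multiplier rule. *)
definition tangent_dir ::
  "nat \<Rightarrow> (nat \<Rightarrow> nat) \<Rightarrow> (nat \<Rightarrow> nat) \<Rightarrow> nat \<Rightarrow> nat \<Rightarrow> (nat \<Rightarrow> real mat) \<Rightarrow> (nat \<Rightarrow> real mat) \<Rightarrow>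
   real mat \<Rightarrow> (nat \<Rightarrow> real mat) \<Rightarrow> real mat \<Rightarrow> bool" where
  "tangent_dir J n r m l A B Zs D DZ \<longleftrightarrow>
     DZ \<in> carrier_mat m l \<and> transpose_mat Zs * DZ = 0\<^sub>m l l \<and>
     (\<forall>j\<in>{1..J}. D j \<in> carrier_mat (n j) l \<and> A j * D j + B j * DZ = 0\<^sub>m (r j) l)"

(* The second-order error E of the retraction is absorbed into the W j through the right
   inverse P j of A j. *)
lemma tangent_dir_feasible_curve:
  fixes A B P Ws D :: "nat \<Rightarrow> real mat" and Zs DZ :: "real mat"
  assumes feas: "feasible J n r m l A B Ws Zs"
    and AP: "\<And>j. j \<in> {1..J} \<Longrightarrow> A j = transpose_mat (P j) \<and> P j \<in> carrier_mat (n j) (r j) \<and>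
        transpose_mat (P j) * P j = 1\<^sub>m (r j) \<and> B j \<in> carrier_mat (r j) m"
    and tan: "tangent_dir J n r m l A B Zs D DZ"
    and t: "0 < t" "t \<le> 1" "(t/2)^2 * l1_norm_mat (transpose_mat DZ * DZ) \<le> 1/2"
  obtains E where "E \<in> carrier_mat m l"
    and "l1_norm_mat E
      \<le> real l * (l1_norm_mat Zs + l1_norm_mat DZ) * l1_norm_mat (transpose_mat DZ * DZ) * t^2"
    and "feasible J n r m l A B (\<lambda>j. Ws j + t \<cdot>\<^sub>m D j + (- (P j * B j)) * E) (Zs + t \<cdot>\<^sub>m DZ + E)"
proof -
  have Zsc: "Zs \<in> carrier_mat m l" and ZZ: "transpose_mat Zs * Zs = 1\<^sub>m l"
    and Wsc: "\<And>j. j \<in> {1..J} \<Longrightarrow> Ws j \<in> carrier_mat (n j) l"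
    and feas_j: "\<And>j. j \<in> {1..J} \<Longrightarrow> A j * Ws j + B j * Zs = 0\<^sub>m (r j) l"
    using feas unfolding feasible_def by auto
  have DZ: "DZ \<in> carrier_mat m l" "transpose_mat Zs * DZ = 0\<^sub>m l l"
    and D: "\<And>j. j \<in> {1..J} \<Longrightarrow> D j \<in> carrier_mat (n j) l \<and> A j * D j + B j * DZ = 0\<^sub>m (r j) l"
    using tan unfolding tangent_dir_def by auto
  obtain Zt where Ztc: "Zt \<in> carrier_mat m l" and orth: "transpose_mat Zt * Zt = 1\<^sub>m l"
    and bd: "l1_norm_mat (Zt - Zs - (2*(t/2)) \<cdot>\<^sub>m DZ)
      \<le> 4 * real l * (l1_norm_mat Zs + (t/2) * l1_norm_mat DZ) * l1_norm_mat (transpose_mat DZ * DZ) * (t/2)^2"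
    using stiefel_retraction[OF Zsc DZ(1) ZZ DZ(2), of "t/2"] t by auto
  define E where "E = Zt - Zs - t \<cdot>\<^sub>m DZ"
  show thesis
  proof
    show Ec: "E \<in> carrier_mat m l" unfolding E_def using Ztc DZ by simp
    have "l1_norm_mat E
        \<le> real l * (l1_norm_mat Zs + (t/2) * l1_norm_mat DZ) * l1_norm_mat (transpose_mat DZ * DZ) * t^2"
      using bd unfolding E_def by (simp add: power2_eq_square)
    also have "\<dots>
      \<le> real l * (l1_norm_mat Zs + l1_norm_mat DZ) * l1_norm_mat (transpose_mat DZ * DZ) * t^2"
      using t l1_norm_mat_nonneg[of DZ] l1_norm_mat_nonneg[of "transpose_mat DZ * DZ"]
      by (intro mult_right_mono mult_left_mono add_left_mono mult_left_le_one_le) auto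
    finally show "l1_norm_mat E
      \<le> real l * (l1_norm_mat Zs + l1_norm_mat DZ) * l1_norm_mat (transpose_mat DZ * DZ) * t^2" .
    have Zt_eq: "Zs + t \<cdot>\<^sub>m DZ + E = Zt"
      unfolding E_def by (rule eq_matI) (use Ztc Zsc DZ in auto)
    show "feasible J n r m l A B (\<lambda>j. Ws j + t \<cdot>\<^sub>m D j + (- (P j * B j)) * E) (Zs + t \<cdot>\<^sub>m DZ + E)"
      unfolding feasible_def Zt_eq
    proof (intro conjI ballI Ztc orth)
      fix j assume j: "j \<in> {1..J}"
      show "Ws j + t \<cdot>\<^sub>m D j + (- (P j * B j)) * E \<in> carrier_mat (n j) l"
        using Wsc[OF j] D[OF j] AP[OF j] Ec by auto
      have Aj: "A j = transpose_mat (P j)" using AP[OF j] by simp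
      show "A j * (Ws j + t \<cdot>\<^sub>m D j + (- (P j * B j)) * E) + B j * Zt = 0\<^sub>m (r j) l"
        unfolding Zt_eq[symmetric] Aj
        by (rule feasible_correction) (use AP[OF j] Wsc[OF j] D[OF j] Zsc DZ Ec feas_j[OF j] in auto)
    qed
  qed
qed

lemma local_min_first_order_bound:
  fixes A B P Ws D :: "nat \<Rightarrow> real mat" and Zs DZ :: "real mat" and pj :: "nat \<Rightarrow> real"
  assumes feas: "feasible J n r m l A B Ws Zs"
    and loc: "\<forall>W Z. feasible J n r m l A B W Z \<and>
        (\<Sum>j\<in>{1..J}. (fro_norm (W j - Ws j))^2) + (fro_norm (Z - Zs))^2 < \<epsilon>^2
        \<longrightarrow> objective J Ws \<le> objective J W"
    and AP: "\<And>j. j \<in> {1..J} \<Longrightarrow> A j = transpose_mat (P j) \<and> P j \<in> carrier_mat (n j) (r j) \<and>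
        transpose_mat (P j) * P j = 1\<^sub>m (r j) \<and> B j \<in> carrier_mat (r j) m"
    and tan: "tangent_dir J n r m l A B Zs D DZ"
    and t: "0 < t" "t \<le> 1" "(t/2)^2 * l1_norm_mat (transpose_mat DZ * DZ) \<le> 1/2"
    and lin: "\<And>j. j \<in> {1..J} \<Longrightarrow> l1_norm_mat (Ws j + t \<cdot>\<^sub>m D j) = l1_norm_mat (Ws j) + t * pj j"
  defines "KE \<equiv> real l * (l1_norm_mat Zs + l1_norm_mat DZ) * l1_norm_mat (transpose_mat DZ * DZ)"
  assumes small: "((\<Sum>j\<in>{1..J}. (l1_norm_mat (D j) + l1_norm_mat (P j * B j) * KE)^2)
                 + (l1_norm_mat DZ + KE)^2) * t^2 < \<epsilon>^2"
  shows "(\<Sum>j\<in>{1..J}. pj j) \<ge> - ((\<Sum>j\<in>{1..J}. l1_norm_mat (P j * B j)) * KE) * t"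
proof -
  have Zsc: "Zs \<in> carrier_mat m l" and Wsc: "\<And>j. j \<in> {1..J} \<Longrightarrow> Ws j \<in> carrier_mat (n j) l"
    using feas unfolding feasible_def by auto
  have DZ: "DZ \<in> carrier_mat m l" and Dc: "\<And>j. j \<in> {1..J} \<Longrightarrow> D j \<in> carrier_mat (n j) l"
    using tan unfolding tangent_dir_def by auto
  obtain E where Ec: "E \<in> carrier_mat m l" and lE: "l1_norm_mat E \<le> KE * t^2"
    and feasW: "feasible J n r m l A B (\<lambda>j. Ws j + t \<cdot>\<^sub>m D j + (- (P j * B j)) * E) (Zs + t \<cdot>\<^sub>m DZ + E)"
    using tangent_dir_feasible_curve[OF feas AP tan t] unfolding KE_def by blast
  define W where "W j = Ws j + t \<cdot>\<^sub>m D j + (- (P j * B j)) * E" for j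
  have KEt: "KE * t^2 \<le> KE * t"
    unfolding KE_def using t l1_norm_mat_nonneg[of Zs] l1_norm_mat_nonneg[of DZ]
      l1_norm_mat_nonneg[of "transpose_mat DZ * DZ"]
    by (intro mult_left_mono) (auto simp: power2_eq_square intro: mult_left_le_one_le)
  have PBc: "P j * B j \<in> carrier_mat (n j) m" if "j \<in> {1..J}" for j using AP[OF that] by auto
  have corr: "l1_norm_mat ((- (P j * B j)) * E) \<le> l1_norm_mat (P j * B j) * (KE * t^2)"
    if j: "j \<in> {1..J}" for j
    using l1_norm_mat_mult_le[of "- (P j * B j)" "n j" m E l] PBc[OF j] Ec
      mult_left_mono[OF lE l1_norm_mat_nonneg[of "P j * B j"]]
    by (simp add: l1_norm_mat_uminus)
  have dW: "l1_norm_mat (W j - Ws j) \<le> t * (l1_norm_mat (D j) + l1_norm_mat (P j * B j) * KE)"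
    if j: "j \<in> {1..J}" for j
  proof -
    have "W j - Ws j = t \<cdot>\<^sub>m D j + (- (P j * B j)) * E"
      unfolding W_def by (rule eq_matI) (use Wsc[OF j] Dc[OF j] PBc[OF j] Ec in auto)
    then have "l1_norm_mat (W j - Ws j)
      \<le> t * l1_norm_mat (D j) + l1_norm_mat (P j * B j) * (KE * t^2)"
      using l1_norm_mat_add_le[of "t \<cdot>\<^sub>m D j" "n j" l "(- (P j * B j)) * E"] Dc[OF j] PBc[OF j] Ec
        corr[OF j] t by (simp add: l1_norm_mat_smult)
    also have "\<dots> \<le> t * l1_norm_mat (D j) + l1_norm_mat (P j * B j) * (KE * t)"
      by (rule add_left_mono, rule mult_left_mono[OF KEt l1_norm_mat_nonneg])
    finally show ?thesis by (simp add: algebra_simps)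
  qed
  have dZ: "l1_norm_mat ((Zs + t \<cdot>\<^sub>m DZ + E) - Zs) \<le> t * (l1_norm_mat DZ + KE)"
  proof -
    have "(Zs + t \<cdot>\<^sub>m DZ + E) - Zs = t \<cdot>\<^sub>m DZ + E" by (rule eq_matI) (use Zsc DZ Ec in auto)
    then have "l1_norm_mat ((Zs + t \<cdot>\<^sub>m DZ + E) - Zs) \<le> t * l1_norm_mat DZ + KE * t^2"
      using l1_norm_mat_add_le[of "t \<cdot>\<^sub>m DZ" m l E] DZ Ec lE t by (simp add: l1_norm_mat_smult)
    then show ?thesis using KEt by (simp add: algebra_simps)
  qed
  have "(\<Sum>j\<in>{1..J}. (fro_norm (W j - Ws j))^2) + (fro_norm ((Zs + t \<cdot>\<^sub>m DZ + E) - Zs))^2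
      \<le> (\<Sum>j\<in>{1..J}. t^2 * (l1_norm_mat (D j) + l1_norm_mat (P j * B j) * KE)^2)
         + t^2 * (l1_norm_mat DZ + KE)^2"
    using dW dZ t by (intro add_mono sum_mono fro_norm_sq_le_if_l1_norm_le) auto
  also have "\<dots> < \<epsilon>^2"
    using small by (simp add: sum_distrib_left algebra_simps)
  finally have "objective J Ws \<le> objective J W"
    using loc feasW unfolding W_def by blast
  also have "objective J W
    \<le> (\<Sum>j\<in>{1..J}. l1_norm_mat (Ws j) + t * pj j + l1_norm_mat (P j * B j) * (KE * t^2))"
    unfolding objective_def
  proof (rule sum_mono)
    fix j assume j: "j \<in> {1..J}"
    have "l1_norm_mat (W j) \<le> l1_norm_mat (Ws j + t \<cdot>\<^sub>m D j) + l1_norm_mat ((- (P j * B j)) * E)"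
      unfolding W_def
      by (rule l1_norm_mat_add_le[of _ "n j" l]) (use Wsc[OF j] Dc[OF j] PBc[OF j] Ec in auto)
    then show "l1_norm_mat (W j)
      \<le> l1_norm_mat (Ws j) + t * pj j + l1_norm_mat (P j * B j) * (KE * t^2)"
      using lin[OF j] corr[OF j] by simp
  qed
  also have "\<dots>
    = objective J Ws + t * ((\<Sum>j\<in>{1..J}. pj j) + ((\<Sum>j\<in>{1..J}. l1_norm_mat (P j * B j)) * KE) * t)"
    unfolding objective_def
    by (simp add: sum.distrib sum_distrib_left sum_distrib_right power2_eq_square algebra_simps)
  finally show ?thesis using t(1) by (simp add: zero_le_mult_iff)
qed

lemma local_min_l1_dir_deriv_nonneg:
  fixes A B P Ws D :: "nat \<Rightarrow> real mat" and Zs DZ :: "real mat"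
  assumes lm: "local_minimizer J n r m l A B Ws Zs"
    and AP: "\<And>j. j \<in> {1..J} \<Longrightarrow> A j = transpose_mat (P j) \<and> P j \<in> carrier_mat (n j) (r j) \<and>
        transpose_mat (P j) * P j = 1\<^sub>m (r j) \<and> B j \<in> carrier_mat (r j) m"
    and tan: "tangent_dir J n r m l A B Zs D DZ"
  shows "(\<Sum>j\<in>{1..J}. l1_mat_dir_deriv (Ws j) (D j)) \<ge> 0"
proof -
  have feas: "feasible J n r m l A B Ws Zs" using lm unfolding local_minimizer_def by blast
  obtain \<epsilon> where eps: "\<epsilon> > 0" and loc: "\<forall>W Z. feasible J n r m l A B W Z \<and>
        (\<Sum>j\<in>{1..J}. (fro_norm (W j - Ws j))^2) + (fro_norm (Z - Zs))^2 < \<epsilon>^2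
        \<longrightarrow> objective J Ws \<le> objective J W"
    using lm unfolding local_minimizer_def by blast
  have Wsc: "\<And>j. j \<in> {1..J} \<Longrightarrow> Ws j \<in> carrier_mat (n j) l"
    using feas unfolding feasible_def by auto
  have Dc: "\<And>j. j \<in> {1..J} \<Longrightarrow> D j \<in> carrier_mat (n j) l"
    using tan unfolding tangent_dir_def by auto
  define KE where "KE
    = real l * (l1_norm_mat Zs + l1_norm_mat DZ) * l1_norm_mat (transpose_mat DZ * DZ)"
  define KC where "KC = (\<Sum>j\<in>{1..J}. l1_norm_mat (P j * B j))"
  define Cd where "Cd = (\<Sum>j\<in>{1..J}. (l1_norm_mat (D j) + l1_norm_mat (P j * B j) * KE)^2)
                 + (l1_norm_mat DZ + KE)^2"
  have lim0: "((\<lambda>t. t) \<longlongrightarrow> (0::real)) (at_right 0)" by (rule tendsto_ident_at)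
  have "eventually (\<lambda>t. 0 < t) (at_right (0::real))" by (rule eventually_at_right_less)
  moreover have "eventually (\<lambda>t. t < 1) (at_right (0::real))"
    by (rule order_tendstoD(2)[OF lim0]) simp
  moreover have "eventually (\<lambda>t. (t/2)^2 * l1_norm_mat (transpose_mat DZ * DZ) < 1/2) (at_right (0::real))"
    by (rule order_tendstoD(2)) (rule tendsto_eq_intros lim0 | simp)+
  moreover have "eventually (\<lambda>t. Cd * t^2 < \<epsilon>^2) (at_right (0::real))"
    by (rule order_tendstoD(2)) ((rule tendsto_eq_intros lim0 | simp)+, use eps in simp)
  moreover have "eventually (\<lambda>t. \<forall>j\<in>{1..J}.
      l1_norm_mat (Ws j + t \<cdot>\<^sub>m D j) = l1_norm_mat (Ws j) + t * l1_mat_dir_deriv (Ws j) (D j)) (at_right (0::real))"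
  proof (intro eventually_ball_finite ballI)
    fix j assume j: "j \<in> {1..J}"
    show "eventually (\<lambda>t. l1_norm_mat (Ws j + t \<cdot>\<^sub>m D j)
        = l1_norm_mat (Ws j) + t * l1_mat_dir_deriv (Ws j) (D j)) (at_right 0)"
      by (rule l1_norm_mat_add_eventually_linear[OF Wsc[OF j] Dc[OF j]])
  qed simp
  ultimately have "eventually (\<lambda>t. - (KC * KE) * t \<le> (\<Sum>j\<in>{1..J}. l1_mat_dir_deriv (Ws j) (D j)))
      (at_right (0::real))"
  proof eventually_elim
    case (elim t)
    show ?case unfolding KC_def KE_def
      by (rule local_min_first_order_bound[OF feas loc AP tan])
        (use elim Cd_def KE_def in \<open>auto simp: algebra_simps\<close>)
  qed
  moreover have "((\<lambda>t. - (KC * KE) * t) \<longlongrightarrow> 0) (at_right (0::real))"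
    by (rule tendsto_eq_intros lim0 | simp)+
  ultimately show ?thesis
    by (intro tendsto_upperbound[of "\<lambda>t. - (KC * KE) * t" 0 "at_right (0::real)"]) auto
qed

(* A family D_1, ..., D_J of n_j x l matrices is encoded as one function on the triples (j, i, k),
   so that Hahn-Banach can be applied in a single function space. *)
definition coord_set :: "nat \<Rightarrow> (nat \<Rightarrow> nat) \<Rightarrow> nat \<Rightarrow> (nat \<times> nat \<times> nat) set" where
  "coord_set J n l = Sigma {1..J} (\<lambda>j. {..<n j} \<times> {..<l})"

lemma finite_coord_set: "finite (coord_set J n l)"
  unfolding coord_set_def by auto

lemma sum_coord_set: "(\<Sum>x\<in>coord_set J n l. f x) = (\<Sum>j\<in>{1..J}. \<Sum>i<n j. \<Sum>k<l. f (j,(i,k)))"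
proof -
  have "(\<Sum>x\<in>coord_set J n l. f x) = (\<Sum>j\<in>{1..J}. \<Sum>b\<in>{..<n j} \<times> {..<l}. f (j,b))"
    unfolding coord_set_def by (subst sum.Sigma) (auto simp: case_prod_beta')
  then show ?thesis by (simp add: sum.cartesian_product case_prod_beta')
qed

definition mat_of_coords :: "(nat \<times> nat \<times> nat \<Rightarrow> real) \<Rightarrow> nat \<Rightarrow> nat \<Rightarrow> nat \<Rightarrow> real mat" where
  "mat_of_coords d j nr nc = mat nr nc (\<lambda>(i,k). d (j,(i,k)))"

definition coords_of_mats ::
  "nat \<Rightarrow> (nat \<Rightarrow> nat) \<Rightarrow> nat \<Rightarrow> (nat \<Rightarrow> real mat) \<Rightarrow> nat \<times> nat \<times> nat \<Rightarrow> real" where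
  "coords_of_mats J n l D x = (if x \<in> coord_set J n l then D (fst x) $$ snd x else 0)"

lemma mat_of_coords_carrier[simp]: "mat_of_coords d j nr nc \<in> carrier_mat nr nc"
  unfolding mat_of_coords_def by simp

lemma mat_of_coords_add: "mat_of_coords (\<lambda>x. d x + e x) j nr nc
  = mat_of_coords d j nr nc + mat_of_coords e j nr nc"
  unfolding mat_of_coords_def by (rule eq_matI) auto

lemma mat_of_coords_scale: "mat_of_coords (\<lambda>x. c * d x) j nr nc = c \<cdot>\<^sub>m mat_of_coords d j nr nc"
  unfolding mat_of_coords_def by (rule eq_matI) auto

lemma mat_of_coords_zero: "mat_of_coords (\<lambda>_. 0) j nr nc = 0\<^sub>m nr nc"
  unfolding mat_of_coords_def by (rule eq_matI) auto

lemma mat_of_coords_of_mats: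
  assumes "j \<in> {1..J}" "D j \<in> carrier_mat (n j) l"
  shows "mat_of_coords (coords_of_mats J n l D) j (n j) l = D j"
  unfolding mat_of_coords_def coords_of_mats_def coord_set_def by (rule eq_matI) (use assms in auto)

lemma sum_coord_set_eq_frob_inner:
  "(\<Sum>x\<in>coord_set J n l. d x * c x)
    = (\<Sum>j\<in>{1..J}. frob_inner (mat_of_coords d j (n j) l) (mat (n j) l (\<lambda>(i,k). c (j,(i,k)))))"
  unfolding sum_coord_set frob_inner_def mat_of_coords_def by (auto intro!: sum.cong)

definition l1_dir_deriv ::
  "nat \<Rightarrow> (nat \<Rightarrow> nat) \<Rightarrow> nat \<Rightarrow> (nat \<Rightarrow> real mat) \<Rightarrow> (nat \<times> nat \<times> nat \<Rightarrow> real) \<Rightarrow> real" where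
  "l1_dir_deriv J n l Ws d = (\<Sum>x\<in>coord_set J n l. abs_dir_deriv (Ws (fst x) $$ snd x) (d x))"

lemma sublinear_l1_dir_deriv: "sublinear (l1_dir_deriv J n l Ws)"
  unfolding sublinear_def l1_dir_deriv_def
  by (auto simp: sum.distrib[symmetric]
    sum_distrib_left abs_dir_deriv_scale intro!: sum_mono abs_dir_deriv_add_le)

lemma l1_dir_deriv_eq_sum:
  assumes "\<And>j. j \<in> {1..J} \<Longrightarrow> Ws j \<in> carrier_mat (n j) l"
  shows "l1_dir_deriv J n l Ws d = (\<Sum>j\<in>{1..J}. l1_mat_dir_deriv (Ws j) (mat_of_coords d j (n j) l))"
proof -
  have "l1_mat_dir_deriv (Ws j) (mat_of_coords d j (n j) l)
      = (\<Sum>i<n j. \<Sum>k<l. abs_dir_deriv (Ws j $$ (i,k)) (d (j,(i,k))))" if "j \<in> {1..J}" for j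
    using assms[OF that] unfolding l1_mat_dir_deriv_def mat_of_coords_def by auto
  then show ?thesis unfolding l1_dir_deriv_def sum_coord_set by simp
qed

lemma l1_dir_deriv_delta_fun:
  assumes x: "x \<in> coord_set J n l"
  shows "l1_dir_deriv J n l Ws (delta_fun x) = abs_dir_deriv (Ws (fst x) $$ snd x) 1"
    and "l1_dir_deriv J n l Ws (\<lambda>y. - delta_fun x y) = abs_dir_deriv (Ws (fst x) $$ snd x) (-1)"
proof -
  have "l1_dir_deriv J n l Ws (delta_fun x)
      = (\<Sum>y\<in>coord_set J n l. if y = x then abs_dir_deriv (Ws (fst y) $$ snd y) 1 else 0)"
    unfolding l1_dir_deriv_def delta_fun_def by (intro sum.cong) (auto simp: abs_dir_deriv_def)
  then show "l1_dir_deriv J n l Ws (delta_fun x) = abs_dir_deriv (Ws (fst x) $$ snd x) 1"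
    using x finite_coord_set by (simp add: sum.delta')
  have "l1_dir_deriv J n l Ws (\<lambda>y. - delta_fun x y)
      = (\<Sum>y\<in>coord_set J n l. if y = x then abs_dir_deriv (Ws (fst y) $$ snd y) (-1) else 0)"
    unfolding l1_dir_deriv_def delta_fun_def by (intro sum.cong) (auto simp: abs_dir_deriv_def)
  then show "l1_dir_deriv J n l Ws (\<lambda>y. - delta_fun x y) = abs_dir_deriv (Ws (fst x) $$ snd x) (-1)"
    using x finite_coord_set by (simp add: sum.delta')
qed

lemma tangent_dir_zero:
  assumes AB: "\<forall>j\<in>{1..J}. A j \<in> carrier_mat (r j) (n j) \<and> B j \<in> carrier_mat (r j) m"
    and Zs: "Zs \<in> carrier_mat m l"
  shows "tangent_dir J n r m l A B Zs (\<lambda>j. 0\<^sub>m (n j) l) (0\<^sub>m m l)"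
  unfolding tangent_dir_def
proof (intro conjI ballI)
  fix j assume "j \<in> {1..J}"
  with AB have "A j \<in> carrier_mat (r j) (n j)" "B j \<in> carrier_mat (r j) m" by auto
  then show "A j * 0\<^sub>m (n j) l + B j * 0\<^sub>m m l = 0\<^sub>m (r j) l" by simp
qed (use Zs in auto)

lemma tangent_dir_add:
  assumes AB: "\<forall>j\<in>{1..J}. A j \<in> carrier_mat (r j) (n j) \<and> B j \<in> carrier_mat (r j) m"
    and Zs: "Zs \<in> carrier_mat m l"
    and D: "tangent_dir J n r m l A B Zs D DZ" and E: "tangent_dir J n r m l A B Zs E EZ"
  shows "tangent_dir J n r m l A B Zs (\<lambda>j. D j + E j) (DZ + EZ)"
  unfolding tangent_dir_def
proof (intro conjI ballI)
  have DZ: "DZ \<in> carrier_mat m l" "transpose_mat Zs * DZ = 0\<^sub>m l l"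
    and EZ: "EZ \<in> carrier_mat m l" "transpose_mat Zs * EZ = 0\<^sub>m l l"
    using D E unfolding tangent_dir_def by auto
  show "DZ + EZ \<in> carrier_mat m l" using DZ EZ by simp
  show "transpose_mat Zs * (DZ + EZ) = 0\<^sub>m l l"
    using DZ EZ Zs by (simp add: mult_add_distrib_mat[of _ l m])
  fix j assume j: "j \<in> {1..J}"
  have Aj: "A j \<in> carrier_mat (r j) (n j)" and Bj: "B j \<in> carrier_mat (r j) m" using AB j by auto
  have Dj: "D j \<in> carrier_mat (n j) l" "A j * D j + B j * DZ = 0\<^sub>m (r j) l"
    and Ej: "E j \<in> carrier_mat (n j) l" "A j * E j + B j * EZ = 0\<^sub>m (r j) l"
    using D E j unfolding tangent_dir_def by auto
  show "D j + E j \<in> carrier_mat (n j) l" using Dj Ej by simp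
  have "A j * (D j + E j) + B j * (DZ + EZ) = (A j * D j + B j * DZ) + (A j * E j + B j * EZ)"
    unfolding mult_add_distrib_mat[OF Aj Dj(1) Ej(1)] mult_add_distrib_mat[OF Bj DZ(1) EZ(1)]
    by (rule eq_matI) (use Aj Bj Dj(1) Ej(1) DZ(1) EZ(1) in auto)
  then show "A j * (D j + E j) + B j * (DZ + EZ) = 0\<^sub>m (r j) l" using Dj Ej by simp
qed

lemma tangent_dir_smult:
  assumes AB: "\<forall>j\<in>{1..J}. A j \<in> carrier_mat (r j) (n j) \<and> B j \<in> carrier_mat (r j) m"
    and Zs: "Zs \<in> carrier_mat m l"
    and D: "tangent_dir J n r m l A B Zs D DZ"
  shows "tangent_dir J n r m l A B Zs (\<lambda>j. c \<cdot>\<^sub>m D j) (c \<cdot>\<^sub>m DZ)"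
  unfolding tangent_dir_def
proof (intro conjI ballI)
  have DZ: "DZ \<in> carrier_mat m l" "transpose_mat Zs * DZ = 0\<^sub>m l l"
    using D unfolding tangent_dir_def by auto
  show "c \<cdot>\<^sub>m DZ \<in> carrier_mat m l" using DZ by simp
  show "transpose_mat Zs * (c \<cdot>\<^sub>m DZ) = 0\<^sub>m l l"
    using DZ Zs by (simp add: mult_smult_distrib[of _ l m])
  fix j assume j: "j \<in> {1..J}"
  have Aj: "A j \<in> carrier_mat (r j) (n j)" and Bj: "B j \<in> carrier_mat (r j) m" using AB j by auto
  have Dj: "D j \<in> carrier_mat (n j) l" "A j * D j + B j * DZ = 0\<^sub>m (r j) l"
    using D j unfolding tangent_dir_def by auto
  show "c \<cdot>\<^sub>m D j \<in> carrier_mat (n j) l" using Dj by simp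
  have "A j * (c \<cdot>\<^sub>m D j) + B j * (c \<cdot>\<^sub>m DZ) = c \<cdot>\<^sub>m (A j * D j + B j * DZ)"
    unfolding mult_smult_distrib[OF Aj Dj(1)] mult_smult_distrib[OF Bj DZ(1)]
    by (rule eq_matI) (use Aj Bj Dj(1) DZ(1) in \<open>auto simp: algebra_simps\<close>)
  then show "A j * (c \<cdot>\<^sub>m D j) + B j * (c \<cdot>\<^sub>m DZ) = 0\<^sub>m (r j) l" using Dj by simp
qed

definition tangent_coords ::
  "nat \<Rightarrow> (nat \<Rightarrow> nat) \<Rightarrow> (nat \<Rightarrow> nat) \<Rightarrow> nat \<Rightarrow> nat \<Rightarrow> (nat \<Rightarrow> real mat) \<Rightarrow> (nat \<Rightarrow> real mat) \<Rightarrow>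
   real mat \<Rightarrow> (nat \<times> nat \<times> nat \<Rightarrow> real) set" where
  "tangent_coords J n r m l A B Zs = {d. (\<forall>x. x \<notin> coord_set J n l \<longrightarrow> d x = 0) \<and>
     (\<exists>DZ. tangent_dir J n r m l A B Zs (\<lambda>j. mat_of_coords d j (n j) l) DZ)}"

lemma lin_subspace_tangent_coords:
  assumes AB: "\<forall>j\<in>{1..J}. A j \<in> carrier_mat (r j) (n j) \<and> B j \<in> carrier_mat (r j) m"
    and Zs: "Zs \<in> carrier_mat m l"
  shows "lin_subspace (tangent_coords J n r m l A B Zs)"
  unfolding lin_subspace_def tangent_coords_def
proof (intro conjI ballI allI CollectI)
  show "\<exists>DZ. tangent_dir J n r m l A B Zs (\<lambda>j. mat_of_coords (\<lambda>_. 0) j (n j) l) DZ"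
    using tangent_dir_zero[OF AB Zs] by (auto simp: mat_of_coords_zero)
next
  fix d e
  assume "d \<in> {d. (\<forall>x. x \<notin> coord_set J n l \<longrightarrow> d x = 0) \<and>
            (\<exists>DZ. tangent_dir J n r m l A B Zs (\<lambda>j. mat_of_coords d j (n j) l) DZ)}"
    and "e \<in> {d. (\<forall>x. x \<notin> coord_set J n l \<longrightarrow> d x = 0) \<and>
            (\<exists>DZ. tangent_dir J n r m l A B Zs (\<lambda>j. mat_of_coords d j (n j) l) DZ)}"
  then obtain DZ EZ where "tangent_dir J n r m l A B Zs (\<lambda>j. mat_of_coords d j (n j) l) DZ"
    "tangent_dir J n r m l A B Zs (\<lambda>j. mat_of_coords e j (n j) l) EZ" by blast
  then have "tangent_dir J n r m l A B Zs
      (\<lambda>j. mat_of_coords d j (n j) l + mat_of_coords e j (n j) l) (DZ + EZ)"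
    by (rule tangent_dir_add[OF AB Zs])
  then show "\<exists>DZ. tangent_dir J n r m l A B Zs (\<lambda>j. mat_of_coords (\<lambda>x. d x + e x) j (n j) l) DZ"
    by (auto simp: mat_of_coords_add)
next
  fix d c
  assume "d \<in> {d. (\<forall>x. x \<notin> coord_set J n l \<longrightarrow> d x = 0) \<and>
            (\<exists>DZ. tangent_dir J n r m l A B Zs (\<lambda>j. mat_of_coords d j (n j) l) DZ)}"
  then obtain DZ where "tangent_dir J n r m l A B Zs (\<lambda>j. mat_of_coords d j (n j) l) DZ" by blast
  then have "tangent_dir J n r m l A B Zs (\<lambda>j. c \<cdot>\<^sub>m mat_of_coords d j (n j) l) (c \<cdot>\<^sub>m DZ)"
    by (rule tangent_dir_smult[OF AB Zs])
  then show "\<exists>DZ. tangent_dir J n r m l A B Zs (\<lambda>j. mat_of_coords (\<lambda>x. c * d x) j (n j) l) DZ"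
    by (auto simp: mat_of_coords_scale)
qed auto

lemma coords_of_mats_in_tangent_coords:
  assumes "tangent_dir J n r m l A B Zs D DZ"
  shows "coords_of_mats J n l D \<in> tangent_coords J n r m l A B Zs"
proof -
  have "tangent_dir J n r m l A B Zs (\<lambda>j. mat_of_coords (coords_of_mats J n l D) j (n j) l) DZ"
    using assms unfolding tangent_dir_def by (simp add: mat_of_coords_of_mats)
  then show ?thesis unfolding tangent_coords_def coords_of_mats_def by auto
qed

lemma orthogonal_subgradients_exist:
  fixes A B P Ws :: "nat \<Rightarrow> real mat" and Zs :: "real mat"
  assumes lm: "local_minimizer J n r m l A B Ws Zs"
    and AP: "\<And>j. j \<in> {1..J} \<Longrightarrow> A j = transpose_mat (P j) \<and> P j \<in> carrier_mat (n j) (r j) \<and>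
        transpose_mat (P j) * P j = 1\<^sub>m (r j) \<and> B j \<in> carrier_mat (r j) m"
  shows "\<exists>G. (\<forall>j\<in>{1..J}. G j \<in> carrier_mat (n j) l \<and> G j \<in> subdiff_l1 (Ws j)) \<and>
             (\<forall>D DZ. tangent_dir J n r m l A B Zs D DZ \<longrightarrow> (\<Sum>j\<in>{1..J}. frob_inner (D j) (G j)) = 0)"
proof -
  have Zsc: "Zs \<in> carrier_mat m l" and Wsc: "\<And>j. j \<in> {1..J} \<Longrightarrow> Ws j \<in> carrier_mat (n j) l"
    using lm unfolding local_minimizer_def feasible_def by auto
  have AB: "\<forall>j\<in>{1..J}. A j \<in> carrier_mat (r j) (n j) \<and> B j \<in> carrier_mat (r j) m"
    using AP by auto
  have "l1_dir_deriv J n l Ws d \<ge> 0" if d: "d \<in> tangent_coords J n r m l A B Zs" for d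
  proof -
    obtain DZ where "tangent_dir J n r m l A B Zs (\<lambda>j. mat_of_coords d j (n j) l) DZ"
      using d unfolding tangent_coords_def by blast
    moreover have "l1_dir_deriv J n l Ws d
        = (\<Sum>j\<in>{1..J}. l1_mat_dir_deriv (Ws j) (mat_of_coords d j (n j) l))"
      by (rule l1_dir_deriv_eq_sum) (use Wsc in blast)
    ultimately show ?thesis using local_min_l1_dir_deriv_nonneg[OF lm AP] by simp
  qed
  then obtain c where c_le: "\<forall>x\<in>coord_set J n l. c x \<le> l1_dir_deriv J n l Ws (delta_fun x) \<and>
        - c x \<le> l1_dir_deriv J n l Ws (\<lambda>y. - delta_fun x y)"
    and c_orth: "\<forall>d\<in>tangent_coords J n r m l A B Zs. (\<Sum>x\<in>coord_set J n l. d x * c x) = 0"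
    using hahn_banach_annihilator[OF finite_coord_set sublinear_l1_dir_deriv
        lin_subspace_tangent_coords[OF AB Zsc]]
    unfolding tangent_coords_def by blast
  define G where "G j = mat (n j) l (\<lambda>(i,k). c (j,(i,k)))" for j
  show ?thesis
  proof (intro exI[of _ G] conjI ballI allI impI)
    fix j assume j: "j \<in> {1..J}"
    show Gc: "G j \<in> carrier_mat (n j) l" unfolding G_def by simp
    show "G j \<in> subdiff_l1 (Ws j)"
    proof (rule subdiff_l1I[OF Wsc[OF j] Gc])
      fix i k assume ik: "i < n j" "k < l"
      then have "(j,(i,k)) \<in> coord_set J n l" using j unfolding coord_set_def by auto
      then show "G j $$ (i,k) \<le> abs_dir_deriv (Ws j $$ (i,k)) 1 \<and> - G j $$ (i,k)
        \<le> abs_dir_deriv (Ws j $$ (i,k)) (-1)"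
        using c_le l1_dir_deriv_delta_fun[of "(j,(i,k))" J n l Ws] ik unfolding G_def by auto
    qed
  next
    fix D DZ assume tan: "tangent_dir J n r m l A B Zs D DZ"
    have "0 = (\<Sum>x\<in>coord_set J n l. coords_of_mats J n l D x * c x)"
      using c_orth coords_of_mats_in_tangent_coords[OF tan] by simp
    also have "\<dots> = (\<Sum>j\<in>{1..J}. frob_inner (D j) (G j))"
      unfolding sum_coord_set_eq_frob_inner G_def
      using tan unfolding tangent_dir_def by (auto simp: mat_of_coords_of_mats intro!: sum.cong)
    finally show "(\<Sum>j\<in>{1..J}. frob_inner (D j) (G j)) = 0" by simp
  qed
qed

lemma orthogonal_subgradient_in_range:
  fixes A B P G :: "nat \<Rightarrow> real mat" and Zs :: "real mat"
  assumes Zsc: "Zs \<in> carrier_mat m l"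
    and AP: "\<And>j. j \<in> {1..J} \<Longrightarrow> A j = transpose_mat (P j) \<and> P j \<in> carrier_mat (n j) (r j) \<and>
        transpose_mat (P j) * P j = 1\<^sub>m (r j) \<and> B j \<in> carrier_mat (r j) m"
    and Gc: "\<And>j. j \<in> {1..J} \<Longrightarrow> G j \<in> carrier_mat (n j) l"
    and orth: "\<And>D DZ. tangent_dir J n r m l A B Zs D DZ \<Longrightarrow> (\<Sum>j\<in>{1..J}. frob_inner (D j) (G j)) = 0"
    and j: "j \<in> {1..J}"
  shows "G j = P j * (transpose_mat (P j) * G j)"
proof (rule eq_proj_if_orthogonal_to_kernel[OF _ _ Gc[OF j]])
  show "P j \<in> carrier_mat (n j) (r j)" "transpose_mat (P j) * P j = 1\<^sub>m (r j)" using AP[OF j] by auto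
next
  fix K assume K: "K \<in> carrier_mat (n j) l" "transpose_mat (P j) * K = 0\<^sub>m (r j) l"
  have "tangent_dir J n r m l A B Zs (\<lambda>i. if i = j then K else 0\<^sub>m (n i) l) (0\<^sub>m m l)"
    unfolding tangent_dir_def
  proof (intro conjI ballI)
    fix i assume i: "i \<in> {1..J}"
    show "(if i = j then K else 0\<^sub>m (n i) l) \<in> carrier_mat (n i) l" using K by auto
    show "A i * (if i = j then K else 0\<^sub>m (n i) l) + B i * 0\<^sub>m m l = 0\<^sub>m (r i) l"
      using K AP[OF i] by auto
  qed (use Zsc in auto)
  have "(\<Sum>i\<in>{1..J}. frob_inner (if i = j then K else 0\<^sub>m (n i) l) (G i))
      = (\<Sum>i\<in>{1..J}. if i = j then frob_inner K (G j) else 0)"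
    by (intro sum.cong) auto
  also have "\<dots> = frob_inner K (G j)" using j by simp
  finally show "frob_inner K (G j) = 0" using orth[OF \<open>tangent_dir _ _ _ _ _ _ _ _ _ _\<close>] by simp
qed

lemma orthogonal_subgradients_sum_in_range:
  fixes A B P G :: "nat \<Rightarrow> real mat" and Zs :: "real mat"
  assumes Zsc: "Zs \<in> carrier_mat m l" and ZZ: "transpose_mat Zs * Zs = 1\<^sub>m l"
    and AP: "\<And>j. j \<in> {1..J} \<Longrightarrow> A j = transpose_mat (P j) \<and> P j \<in> carrier_mat (n j) (r j) \<and>
        transpose_mat (P j) * P j = 1\<^sub>m (r j) \<and> B j \<in> carrier_mat (r j) m"
    and Gc: "\<And>j. j \<in> {1..J} \<Longrightarrow> G j \<in> carrier_mat (n j) l"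
    and orth: "\<And>D DZ. tangent_dir J n r m l A B Zs D DZ \<Longrightarrow> (\<Sum>j\<in>{1..J}. frob_inner (D j) (G j)) = 0"
  defines "L1 \<equiv> \<lambda>j. transpose_mat (P j) * G j"
  defines "M \<equiv> msum m l J (\<lambda>j. transpose_mat (B j) * L1 j)"
  shows "M = Zs * (transpose_mat Zs * M)"
proof -
  have Pc: "\<And>j. j \<in> {1..J} \<Longrightarrow> P j \<in> carrier_mat (n j) (r j)"
    and PP: "\<And>j. j \<in> {1..J} \<Longrightarrow> transpose_mat (P j) * P j = 1\<^sub>m (r j)"
    and Bc: "\<And>j. j \<in> {1..J} \<Longrightarrow> B j \<in> carrier_mat (r j) m" using AP by auto
  have L1c: "L1 j \<in> carrier_mat (r j) l" if "j \<in> {1..J}" for j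
    unfolding L1_def using Pc[OF that] Gc[OF that] by simp
  have Mc: "M \<in> carrier_mat m l" unfolding M_def msum_def by simp
  show ?thesis
  proof (rule eq_proj_if_orthogonal_to_kernel[OF Zsc ZZ Mc])
    fix K assume K: "K \<in> carrier_mat m l" "transpose_mat Zs * K = 0\<^sub>m l l"
    have tan: "tangent_dir J n r m l A B Zs (\<lambda>j. (- (P j * B j)) * K) K"
      unfolding tangent_dir_def
    proof (intro conjI ballI K)
      fix j assume j: "j \<in> {1..J}"
      show "(- (P j * B j)) * K \<in> carrier_mat (n j) l" using Pc[OF j] Bc[OF j] K by simp
      show "A j * ((- (P j * B j)) * K) + B j * K = 0\<^sub>m (r j) l"
        using AP[OF j] transpose_mult_cancel[OF Pc[OF j] PP[OF j] Bc[OF j] K(1)] Bc[OF j] K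
        by (intro eq_matI) auto
    qed
    have term_eq: "frob_inner ((- (P j * B j)) * K) (G j)
      = - frob_inner (transpose_mat (B j) * L1 j) K"
      if j: "j \<in> {1..J}" for j
    proof -
      have BKc: "B j * K \<in> carrier_mat (r j) l" using Bc[OF j] K by simp
      have "(- (P j * B j)) * K = - (P j * (B j * K))" using Pc[OF j] Bc[OF j] K by simp
      then have "frob_inner ((- (P j * B j)) * K) (G j) = - frob_inner (G j) (P j * (B j * K))"
        using frob_inner_commute[of "P j * (B j * K)" "n j" l "G j"] Pc[OF j] BKc Gc[OF j]
        by (simp add: frob_inner_uminus_left)
      also have "frob_inner (G j) (P j * (B j * K)) = frob_inner (L1 j) (B j * K)"
        unfolding L1_def by (rule frob_inner_mult_right[OF Gc[OF j] Pc[OF j] BKc])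
      also have "\<dots> = frob_inner (transpose_mat (B j) * L1 j) K"
        by (rule frob_inner_mult_right[OF L1c[OF j] Bc[OF j] K(1)])
      finally show ?thesis .
    qed
    have "frob_inner M K = (\<Sum>j\<in>{1..J}. frob_inner (transpose_mat (B j) * L1 j) K)"
      unfolding M_def
    proof (rule frob_inner_msum_left[OF _ K(1)])
      fix j assume j: "j \<in> {1..J}"
      show "transpose_mat (B j) * L1 j \<in> carrier_mat m l" using Bc[OF j] L1c[OF j] by simp
    qed
    also have "\<dots> = - (\<Sum>j\<in>{1..J}. frob_inner ((- (P j * B j)) * K) (G j))"
      by (simp add: term_eq sum_negf)
    finally have "frob_inner M K = - (\<Sum>j\<in>{1..J}. frob_inner ((- (P j * B j)) * K) (G j))" .
    then show "frob_inner K M = 0"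
      using orth[OF tan] frob_inner_commute[OF K(1) Mc] by simp
  qed
qed

lemma multipliers_of_orthogonal_subgradients:
  fixes A B P G :: "nat \<Rightarrow> real mat" and Zs :: "real mat"
  assumes Zsc: "Zs \<in> carrier_mat m l" and ZZ: "transpose_mat Zs * Zs = 1\<^sub>m l"
    and AP: "\<And>j. j \<in> {1..J} \<Longrightarrow> A j = transpose_mat (P j) \<and> P j \<in> carrier_mat (n j) (r j) \<and>
        transpose_mat (P j) * P j = 1\<^sub>m (r j) \<and> B j \<in> carrier_mat (r j) m"
    and Gc: "\<And>j. j \<in> {1..J} \<Longrightarrow> G j \<in> carrier_mat (n j) l"
    and orth: "\<And>D DZ. tangent_dir J n r m l A B Zs D DZ \<Longrightarrow> (\<Sum>j\<in>{1..J}. frob_inner (D j) (G j)) = 0"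
  shows "\<exists>L1 L2. (\<forall>j\<in>{1..J}. L1 j \<in> carrier_mat (r j) l \<and> transpose_mat (A j) * L1 j = G j) \<and>
           L2 \<in> carrier_mat l l \<and> msum m l J (\<lambda>j. transpose_mat (B j) * L1 j) + Zs * L2 = 0\<^sub>m m l"
proof -
  define L1 where "L1 j = transpose_mat (P j) * G j" for j
  define M where "M = msum m l J (\<lambda>j. transpose_mat (B j) * L1 j)"
  have Mc: "M \<in> carrier_mat m l" unfolding M_def msum_def by simp
  have M_range: "M = Zs * (transpose_mat Zs * M)"
    unfolding M_def L1_def by (rule orthogonal_subgradients_sum_in_range[OF Zsc ZZ AP Gc orth])
  define L2 where "L2 = - (transpose_mat Zs * M)"
  show ?thesis
  proof (intro exI[of _ L1] exI[of _ L2] conjI ballI)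
    fix j assume j: "j \<in> {1..J}"
    show "L1 j \<in> carrier_mat (r j) l" unfolding L1_def using AP[OF j] Gc[OF j] by auto
    show "transpose_mat (A j) * L1 j = G j"
      using orthogonal_subgradient_in_range[OF Zsc AP Gc orth j] AP[OF j] unfolding L1_def by simp
  next
    show "L2 \<in> carrier_mat l l" unfolding L2_def using Zsc Mc by simp
    have "M + Zs * L2 = M - Zs * (transpose_mat Zs * M)"
      unfolding L2_def using Zsc Mc by (intro eq_matI) auto
    also have "\<dots> = 0\<^sub>m m l"
    proof (rule eq_matI)
      fix i k assume "i < dim_row (0\<^sub>m m l)" "k < dim_col (0\<^sub>m m l)"
      then show "(M - Zs * (transpose_mat Zs * M)) $$ (i,k) = 0\<^sub>m m l $$ (i,k)"
        using arg_cong[OF M_range, of "\<lambda>X. X $$ (i,k)"] Mc Zsc by simp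
    qed (use Mc Zsc in auto)
    finally show "msum m l J (\<lambda>j. transpose_mat (B j) * L1 j) + Zs * L2 = 0\<^sub>m m l"
      unfolding M_def .
  qed
qed

theorem lemma1:
  fixes J m l :: nat and n r :: "nat \<Rightarrow> nat"
    and X P Q S Sinv A B Ws :: "nat \<Rightarrow> real mat" and Zs :: "real mat"
  assumes J: "J \<ge> 1" and l: "l \<ge> 1"
    and X: "\<And>j. j \<in> {1..J} \<Longrightarrow> X j \<in> carrier_mat (n j) m"
    and P: "\<And>j. j \<in> {1..J} \<Longrightarrow> P j \<in> carrier_mat (n j) (r j) \<and> transpose_mat (P j) * P j = 1\<^sub>m (r j)"
    and Q: "\<And>j. j \<in> {1..J} \<Longrightarrow> Q j \<in> carrier_mat m (r j) \<and> transpose_mat (Q j) * Q j = 1\<^sub>m (r j)"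
    and S: "\<And>j. j \<in> {1..J} \<Longrightarrow> S j \<in> carrier_mat (r j) (r j) \<and>
              (\<forall>i<r j. \<forall>k<r j. i \<noteq> k \<longrightarrow> S j $$ (i,k) = 0) \<and> (\<forall>i<r j. S j $$ (i,i) > 0)"
    and svd: "\<And>j. j \<in> {1..J} \<Longrightarrow> X j = P j * S j * transpose_mat (Q j)"
    and Sinv: "\<And>j. j \<in> {1..J} \<Longrightarrow> Sinv j \<in> carrier_mat (r j) (r j) \<and>
              Sinv j * S j = 1\<^sub>m (r j) \<and> S j * Sinv j = 1\<^sub>m (r j)"
    and A: "\<And>j. j \<in> {1..J} \<Longrightarrow> A j = transpose_mat (P j)"
    and B: "\<And>j. j \<in> {1..J} \<Longrightarrow> B j = - (Sinv j * transpose_mat (Q j))"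
    and locmin: "local_minimizer J n r m l A B Ws Zs"
  shows "\<exists>L1 :: nat \<Rightarrow> real mat. \<exists>L2 :: real mat.
           (\<forall>j\<in>{1..J}. L1 j \<in> carrier_mat (r j) l) \<and> L2 \<in> carrier_mat l l \<and>
           (\<forall>j\<in>{1..J}. transpose_mat (A j) * L1 j \<in> subdiff_l1 (Ws j)) \<and>
           msum m l J (\<lambda>j. transpose_mat (B j) * L1 j) + Zs * L2 = 0\<^sub>m m l \<and>
           (\<forall>j\<in>{1..J}. A j * Ws j + B j * Zs = 0\<^sub>m (r j) l) \<and>
           transpose_mat Zs * Zs = 1\<^sub>m l"
proof -
  have Zsc: "Zs \<in> carrier_mat m l" and ZZ: "transpose_mat Zs * Zs = 1\<^sub>m l"
    and feas: "\<forall>j\<in>{1..J}. A j * Ws j + B j * Zs = 0\<^sub>m (r j) l"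
    using locmin unfolding local_minimizer_def feasible_def by auto
  have AP: "\<And>j. j \<in> {1..J} \<Longrightarrow> A j = transpose_mat (P j) \<and> P j \<in> carrier_mat (n j) (r j) \<and>
      transpose_mat (P j) * P j = 1\<^sub>m (r j) \<and> B j \<in> carrier_mat (r j) m"
    using A P B Sinv Q by fastforce
  obtain G where G: "\<forall>j\<in>{1..J}. G j \<in> carrier_mat (n j) l \<and> G j \<in> subdiff_l1 (Ws j)"
    and orth: "\<forall>D DZ. tangent_dir J n r m l A B Zs D DZ \<longrightarrow> (\<Sum>j\<in>{1..J}. frob_inner (D j) (G j)) = 0"
    using orthogonal_subgradients_exist[OF locmin AP] by blast
  obtain L1 L2 where L1: "\<forall>j\<in>{1..J}. L1 j \<in> carrier_mat (r j) l \<and> transpose_mat (A j) * L1 j = G j"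
    and L2: "L2 \<in> carrier_mat l l" "msum m l J (\<lambda>j. transpose_mat (B j) * L1 j) + Zs * L2 = 0\<^sub>m m l"
    using multipliers_of_orthogonal_subgradients[where J = J and n = n and r = r and A = A and B = B
        and P = P and G = G, OF Zsc ZZ AP] G orth by blast
  show ?thesis
    using L1 L2 G feas ZZ by (intro exI[of _ L1] exI[of _ L2]) auto
qed

end
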